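(* In the following setting: $\Phi=\Psi+\mathcal{X}$, $\Psi=f+h$ with $f$ differentiable with $L_f$-Lipschitz gradient, $h$ convex differentiable with $L_h$-Lipschitz gradient, $L_\Psi=L_f+L_h>0$, $\mathcal{X}$ proper closed convex with bounded domain; $\mathcal{P}(x,y,c):=\operatorname{argmin}_u\{\langle y,u\rangle+\frac1{2c}\|u-x\|^2+\mathcal{X}(u)\}$, $\mathcal{G}(x,y,c):=\frac1c[x-\mathcal{P}(x,y,c)]$, with a constant $M$ such that $\|\mathcal{P}(x,y,c)\|\le M$ for all $c>0$, $x,y$; a stochastic oracle returning at each call with input $x$ a vector $G(x,\xi)$ with $\mathbb{E}[G(x,\xi)]=\nabla\Psi(x)$ and $\mathbb{E}\|G(x,\xi)-\nabla\Psi(x)\|^2\le\sigma^2$. Given $N\ge1$ and a parameter $\tilde D>0$, run the mini-batch RSAG method: draw $R$ with $\mathrm{Prob}\{R=k\}=p_k$, set $x^{ag}_0=x_0$, and for $k=1,\ldots,R$ $$x^{md}_k=(1-\alpha_k)x^{ag}_{k-1}+\alpha_kx_{k-1},\ \bar G_k=\frac1{m_k}\sum_{i=1}^{m_k}G(x^{md}_k,\xi_{k,i}),\ x_k=\mathcal{P}(x_{k-1},\bar G_k,\lambda_k),\ x^{ag}_k=\mathcal{P}(x^{md}_k,\bar G_k,\beta_k),$$ with $\alpha_k=\frac2{k+1}$, $\beta_k=\frac1{2L_\Psi}$, $\lambda_k=\frac{k\beta_k}{2}$, $\Gamma_k=\frac{2}{k(k+1)}$, $p_k=\frac{\Gamma_k^{-1}\beta_k(1-L_\Psi\beta_k)}{\sum_{j=1}^N\Gamma_j^{-1}\beta_j(1-L_\Psi\beta_j)}$,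 and $m_k=\big\lceil\frac{\sigma^2k}{L_\Psi\tilde D^2}\big\rceil$ for $k=1,2,\ldots$. Assume an optimal solution $x^*$ of $\min\Phi$ exists. Then for any $N\ge1$, $$\mathbb{E}[\|\mathcal{G}(x^{md}_R,\nabla\Psi(x^{md}_R),\beta_R)\|^2]\le96L_\Psi\Big[\frac{4L_\Psi\|x_0-x^*\|^2}{N^3}+\frac{L_f(\|x^*\|^2+2M^2)+3\tilde D^2}{N}\Big].$$
   Context: $\|\cdot\|$ is the Euclidean norm. Expectations are over $R$ (drawn independently) and the oracle samples $\xi_{k,i}$. *)

theory Defs
  imports "HOL-Probability.Probability"
begin

text \<open>Extended-real-valued functions (value \<infinity> outside the domain).\<close>

definition proper_efun :: "('a \<Rightarrow> ereal) \<Rightarrow> bool" where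
  "proper_efun X \<longleftrightarrow> (\<forall>x. X x \<noteq> -\<infinity>) \<and> (\<exists>x. X x \<noteq> \<infinity>)"

definition closed_efun :: "('a::topological_space \<Rightarrow> ereal) \<Rightarrow> bool" where
  "closed_efun X \<longleftrightarrow> closed {(x, t::real). X x \<le> ereal t}"

definition convex_efun :: "('a::real_vector \<Rightarrow> ereal) \<Rightarrow> bool" where
  "convex_efun X \<longleftrightarrow> (\<forall>x y. \<forall>u::real. 0 < u \<and> u < 1 \<longrightarrow>
      X ((1 - u) *\<^sub>R x + u *\<^sub>R y) \<le> ereal (1 - u) * X x + ereal u * X y)"

definition edom :: "('a \<Rightarrow> ereal) \<Rightarrow> 'a set" where
  "edom X = {x. X x < \<infinity>}"

definition prox_map :: "('a::real_inner \<Rightarrow> ereal) \<Rightarrow> 'a \<Rightarrow> 'a \<Rightarrow> real \<Rightarrow> 'a" where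
  "prox_map X x y c = (THE u. \<forall>v.
      ereal (inner y u + (1 / (2 * c)) * (norm (u - x))\<^sup>2) + X u
        \<le> ereal (inner y v + (1 / (2 * c)) * (norm (v - x))\<^sup>2) + X v)"

definition grad_map :: "('a::real_inner \<Rightarrow> ereal) \<Rightarrow> 'a \<Rightarrow> 'a \<Rightarrow> real \<Rightarrow> 'a" where
  "grad_map X x y c = (1 / c) *\<^sub>R (x - prox_map X x y c)"

text \<open>Parameters of the RSAG method (L = L_Psi).\<close>
definition rsag_alpha :: "nat \<Rightarrow> real" where "rsag_alpha k = 2 / (real k + 1)"
definition rsag_beta :: "real \<Rightarrow> nat \<Rightarrow> real" where "rsag_beta L k = 1 / (2 * L)"
definition rsag_lambda :: "real \<Rightarrow> nat \<Rightarrow> real" where "rsag_lambda L k = real k * rsag_beta L k / 2"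
definition rsag_Gamma :: "nat \<Rightarrow> real" where "rsag_Gamma k = 2 / (real k * (real k + 1))"

definition rsag_prob :: "real \<Rightarrow> nat \<Rightarrow> nat \<Rightarrow> real" where
  "rsag_prob L N k =
     (inverse (rsag_Gamma k) * rsag_beta L k * (1 - L * rsag_beta L k)) /
     (\<Sum>j = 1..N. inverse (rsag_Gamma j) * rsag_beta L j * (1 - L * rsag_beta L j))"

definition rsag_batch :: "real \<Rightarrow> real \<Rightarrow> real \<Rightarrow> nat \<Rightarrow> nat" where
  "rsag_batch \<sigma> L D k = nat \<lceil>\<sigma>\<^sup>2 * real k / (L * D\<^sup>2)\<rceil>"

text \<open>State (x_k, x^ag_k) of the mini-batch RSAG method; \<omega> (k,i) is the sample \<xi>_{k,i}.\<close>
fun rsag_state :: "('a::real_inner \<Rightarrow> ereal) \<Rightarrow> ('a \<Rightarrow> 'b \<Rightarrow> 'a) \<Rightarrow> real \<Rightarrow> real \<Rightarrow> real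
      \<Rightarrow> 'a \<Rightarrow> (nat \<times> nat \<Rightarrow> 'b) \<Rightarrow> nat \<Rightarrow> 'a \<times> 'a" where
  "rsag_state X G L \<sigma> D x0 \<omega> 0 = (x0, x0)"
| "rsag_state X G L \<sigma> D x0 \<omega> (Suc n) =
     (let k = Suc n;
          (x, xag) = rsag_state X G L \<sigma> D x0 \<omega> n;
          xmd = (1 - rsag_alpha k) *\<^sub>R xag + rsag_alpha k *\<^sub>R x;
          m = rsag_batch \<sigma> L D k;
          Gbar = (1 / real m) *\<^sub>R (\<Sum>i = 1..m. G xmd (\<omega> (k, i)))
      in (prox_map X x Gbar (rsag_lambda L k), prox_map X xmd Gbar (rsag_beta L k)))"

definition rsag_xmd :: "('a::real_inner \<Rightarrow> ereal) \<Rightarrow> ('a \<Rightarrow> 'b \<Rightarrow> 'a) \<Rightarrow> real \<Rightarrow> real \<Rightarrow> real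
      \<Rightarrow> 'a \<Rightarrow> (nat \<times> nat \<Rightarrow> 'b) \<Rightarrow> nat \<Rightarrow> 'a" where
  "rsag_xmd X G L \<sigma> D x0 \<omega> k =
     (let (x, xag) = rsag_state X G L \<sigma> D x0 \<omega> (k - 1)
      in (1 - rsag_alpha k) *\<^sub>R xag + rsag_alpha k *\<^sub>R x)"

end

theory Submission
  imports Defs
begin

text \<open>
  Each step of the method satisfies, pathwise, the descent inequality of the accelerated gradient
  analysis: the prox-gradient step from \<open>x_md(k)\<close> decreases \<open>\<Psi> + X\<close>, the prox step from
  \<open>x(k-1)\<close> satisfies a three-point inequality towards \<open>x*\<close>, and the lower bound for \<open>\<Psi>\<close> only costs
  an \<open>L_f\<close>-curvature term because \<open>h\<close> is convex. Weighted by \<open>1/\<Gamma>(k) = k(k+1)/2\<close>, the optimality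
  gaps and the distances to \<open>x*\<close> telescope, so \<open>\<Sum> |\<G>(x_md(k), \<nabla>\<Psi>(x_md(k)), \<beta>)|\<^sup>2 / \<Gamma>(k)\<close> is
  bounded by \<open>|x0 - x*|\<^sup>2\<close>, by the curvature terms (controlled through the bound \<open>M\<close> on prox
  points) and by weighted sums of the mini-batch errors \<open>\<delta>(k)\<close>. In expectation the cross terms
  \<open>\<langle>\<delta>(k), x* - x(k-1)\<rangle>\<close> vanish, because \<open>x(k-1)\<close> and \<open>x_md(k)\<close> do not depend on the
  \<open>k\<close>-th batch, and \<open>E |\<delta>(k)|\<^sup>2 \<le> \<sigma>\<^sup>2 / m(k) \<le> L D\<^sup>2 / k\<close>. Drawing \<open>R\<close> with probability
  proportional to \<open>1/\<Gamma>(k)\<close> turns the weighted sum into the expectation of the statement.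
\<close>

lemma norm_convex_combination_power2:
  fixes a b :: "'a::real_inner"
  shows "(norm ((1 - t) *\<^sub>R a + t *\<^sub>R b))\<^sup>2
    = (1 - t) * (norm a)\<^sup>2 + t * (norm b)\<^sup>2 - t * (1 - t) * (norm (a - b))\<^sup>2"
  unfolding power2_norm_eq_inner
  by (simp add: inner_add inner_diff inner_scaleR inner_commute algebra_simps)

lemma le_of_forall_convex_weight:
  fixes a b K :: real
  assumes "\<And>t. 0 < t \<Longrightarrow> t < 1 \<Longrightarrow> a + (1 - t) * K \<le> b"
  shows "a + K \<le> b"
proof (cases "K \<le> 0")
  case True
  have "a + K / 2 \<le> b" using assms[of "1/2"] by simp
  then show ?thesis using True by linarith
next
  case False
  show ?thesis
  proof (rule field_le_epsilon)
    fix e :: real assume e: "0 < e"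
    define t where "t = min (1/2) (e / K)"
    have t: "0 < t" "t < 1" "t * K \<le> e"
      using e False by (auto simp: t_def min_def field_simps)
    then show "a + K \<le> b + e" using assms[OF t(1,2)] by (simp add: algebra_simps)
  qed
qed

lemma young_inner:
  fixes u v :: "'a::real_inner"
  assumes c: "c > 0"
  shows "inner u v \<le> c / 2 * (norm u)\<^sup>2 + 1 / (2 * c) * (norm v)\<^sup>2"
proof -
  have "inner u v \<le> norm u * norm v" by (rule norm_cauchy_schwarz)
  also have "\<dots> \<le> c / 2 * (norm u)\<^sup>2 + 1 / (2 * c) * (norm v)\<^sup>2"
  proof -
    have "0 \<le> (c * norm u - norm v)\<^sup>2 / (2 * c)" using c by simp
    also have "\<dots> = c / 2 * (norm u)\<^sup>2 + 1 / (2 * c) * (norm v)\<^sup>2 - norm u * norm v"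
      using c by (simp add: power2_eq_square field_simps)
    finally show ?thesis by simp
  qed
  finally show ?thesis .
qed

lemma abs_inner_le_sum_power2:
  fixes u v :: "'a::real_inner"
  shows "\<bar>inner u v\<bar> \<le> (norm u)\<^sup>2 + (norm v)\<^sup>2"
proof -
  have "\<bar>inner u v\<bar> \<le> norm u * norm v" by (rule Cauchy_Schwarz_ineq2)
  also have "\<dots> \<le> (norm u)\<^sup>2 + (norm v)\<^sup>2"
  proof -
    have "0 \<le> (norm u - norm v)\<^sup>2" by simp
    then have "2 * (norm u * norm v) \<le> (norm u)\<^sup>2 + (norm v)\<^sup>2"
      by (simp add: power2_eq_square algebra_simps)
    moreover have "0 \<le> norm u * norm v" by simp
    ultimately show ?thesis by linarith
  qed
  finally show ?thesis .
qed

lemma sum_power2_le: "((a::real) + b)\<^sup>2 \<le> 2 * a\<^sup>2 + 2 * b\<^sup>2"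
  using sum_squares_bound[of a b] by (simp add: power2_eq_square algebra_simps)

section \<open>Prox mapping\<close>

definition prox_quad :: "'a::real_inner \<Rightarrow> 'a \<Rightarrow> real \<Rightarrow> 'a \<Rightarrow> real" where
  "prox_quad x y c u = inner y u + (1 / (2 * c)) * (norm (u - x))\<^sup>2"

lemma prox_quad_convex_combination:
  fixes a b :: "'a::real_inner"
  shows "prox_quad x y c ((1 - t) *\<^sub>R a + t *\<^sub>R b)
    = (1 - t) * prox_quad x y c a + t * prox_quad x y c b - t * (1 - t) * (norm (a - b))\<^sup>2 / (2 * c)"
proof -
  have "(1 - t) *\<^sub>R a + t *\<^sub>R b - x = (1 - t) *\<^sub>R (a - x) + t *\<^sub>R (b - x)"
    by (simp add: algebra_simps)
  then have "(norm ((1 - t) *\<^sub>R a + t *\<^sub>R b - x))\<^sup>2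
      = (1 - t) * (norm (a - x))\<^sup>2 + t * (norm (b - x))\<^sup>2 - t * (1 - t) * (norm (a - b))\<^sup>2"
    using norm_convex_combination_power2[of t "a - x" "b - x"] by simp
  then have e: "(1 / (2 * c)) * (norm ((1 - t) *\<^sub>R a + t *\<^sub>R b - x))\<^sup>2
      = (1 / (2 * c)) * ((1 - t) * (norm (a - x))\<^sup>2 + t * (norm (b - x))\<^sup>2 - t * (1 - t) * (norm (a - b))\<^sup>2)"
    by simp
  show ?thesis
    unfolding prox_quad_def e
    by (simp add: inner_add_right inner_diff_right algebra_simps diff_divide_distrib add_divide_distrib)
qed

lemma prox_quad_cross_difference:
  fixes x1 x2 y1 y2 p1 p2 :: "'a::real_inner"
  assumes c: "c > 0"
  shows "prox_quad x1 y1 c p2 - prox_quad x1 y1 c p1 + (prox_quad x2 y2 c p1 - prox_quad x2 y2 c p2)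
       = inner (p1 - p2) ((x1 - x2) - c *\<^sub>R (y1 - y2)) / c"
proof -
  have "(norm (p2 - x1))\<^sup>2 - (norm (p1 - x1))\<^sup>2 + ((norm (p1 - x2))\<^sup>2 - (norm (p2 - x2))\<^sup>2)
      = 2 * inner (p1 - p2) (x1 - x2)"
    unfolding power2_norm_eq_inner
    by (simp add: inner_diff_left inner_diff_right inner_commute algebra_simps)
  then have "(1 / (2 * c)) * ((norm (p2 - x1))\<^sup>2 - (norm (p1 - x1))\<^sup>2 + ((norm (p1 - x2))\<^sup>2 - (norm (p2 - x2))\<^sup>2))
      = inner (p1 - p2) (x1 - x2) / c"
    using c by simp
  moreover have "inner y1 p2 - inner y1 p1 + (inner y2 p1 - inner y2 p2) = - inner (p1 - p2) (y1 - y2)"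
    by (simp add: inner_diff_left inner_diff_right inner_commute algebra_simps)
  moreover have "inner (p1 - p2) ((x1 - x2) - c *\<^sub>R (y1 - y2)) / c
     = inner (p1 - p2) (x1 - x2) / c - inner (p1 - p2) (y1 - y2)"
    using c by (simp add: inner_diff_right inner_add_right field_simps)
  ultimately show ?thesis unfolding prox_quad_def by (simp add: algebra_simps)
qed

locale prox_regularizer =
  fixes X :: "'a::euclidean_space \<Rightarrow> ereal"
  assumes proper: "proper_efun X" and closed: "closed_efun X" and convex: "convex_efun X"
    and bounded_edom: "bounded (edom X)"
begin

definition Xreal :: "'a \<Rightarrow> real" where "Xreal u = real_of_ereal (X u)"

lemma X_eq_ereal: "X u \<noteq> \<infinity> \<Longrightarrow> X u = ereal (Xreal u)"
  using proper unfolding proper_efun_def Xreal_def by (cases "X u") auto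

lemma obtain_finite_point:
  obtains v where "X v \<noteq> \<infinity>"
  using proper unfolding proper_efun_def by auto

lemma X_convex_combination_le:
  assumes t: "0 \<le> t" "t \<le> 1" and a: "t < 1 \<Longrightarrow> X a \<noteq> \<infinity>" and b: "0 < t \<Longrightarrow> X b \<noteq> \<infinity>"
  shows "X ((1 - t) *\<^sub>R a + t *\<^sub>R b) \<le> ereal ((1 - t) * Xreal a + t * Xreal b)"
proof -
  consider "t = 0" | "t = 1" | "0 < t" "t < 1" using t by linarith
  then show ?thesis
  proof cases
    case 3
    then have "X ((1 - t) *\<^sub>R a + t *\<^sub>R b) \<le> ereal (1 - t) * X a + ereal t * X b"
      using convex unfolding convex_efun_def by auto
    then show ?thesis using X_eq_ereal[OF a] X_eq_ereal[OF b] 3 by simp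
  qed (use X_eq_ereal[OF a] X_eq_ereal[OF b] in auto)
qed

lemma lsc_plus_continuous:
  assumes q: "continuous_on UNIV q" and u: "u \<longlonglongrightarrow> l"
    and ev: "eventually (\<lambda>n. ereal (q (u n)) + X (u n) \<le> ereal s) sequentially"
  shows "ereal (q l) + X l \<le> ereal s"
proof -
  have shift: "X v \<le> ereal (s - q v) \<longleftrightarrow> ereal (q v) + X v \<le> ereal s" for v
    by (cases "X v") auto
  have "((\<lambda>n. (u n, s - q (u n))) \<longlonglongrightarrow> (l, s - q l))"
    using u continuous_on_tendsto_compose[OF q u] by (intro tendsto_intros) auto
  moreover have "eventually (\<lambda>n. (u n, s - q (u n)) \<in> {(x, t). X x \<le> ereal t}) sequentially"
    using ev by (rule eventually_mono) (auto simp: shift)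
  ultimately have "(l, s - q l) \<in> {(x, t). X x \<le> ereal t}"
    using closed unfolding closed_efun_def by (intro Lim_in_closed_set) auto
  then show ?thesis by (simp add: shift)
qed

lemma prox_exists:
  "\<exists>u. \<forall>v. ereal (prox_quad x y c u) + X u \<le> ereal (prox_quad x y c v) + X v"
proof -
  define \<phi> where "\<phi> v = ereal (prox_quad x y c v) + X v" for v
  have q: "continuous_on UNIV (prox_quad x y c)"
    unfolding prox_quad_def by (intro continuous_intros)
  obtain v0 where v0: "X v0 \<noteq> \<infinity>" by (rule obtain_finite_point)
  obtain s where s: "\<And>n. s n \<in> range \<phi>" "s \<longlonglongrightarrow> Inf (range \<phi>)"
    using Inf_as_limit[of "range \<phi>"] by auto
  have "\<forall>n. \<exists>v. s n = \<phi> v" using s(1) by auto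
  then obtain u where u: "\<And>n. s n = \<phi> (u n)" by metis
  \<comment> \<open>points outside the domain can be traded for \<open>v0\<close> without increasing \<open>\<phi>\<close>, making the sequence bounded\<close>
  define u' where "u' n = (if X (u n) \<noteq> \<infinity> then u n else v0)" for n
  have "(\<lambda>n. \<phi> (u' n)) \<longlonglongrightarrow> Inf (range \<phi>)"
  proof (rule tendsto_sandwich[OF _ _ tendsto_const])
    show "\<forall>\<^sub>F n in sequentially. Inf (range \<phi>) \<le> \<phi> (u' n)"
      by (simp add: INF_lower)
    show "\<forall>\<^sub>F n in sequentially. \<phi> (u' n) \<le> s n"
      unfolding u u'_def \<phi>_def by simp
  qed (use s(2) in simp)
  moreover have "range u' \<subseteq> edom X"
    using v0 unfolding u'_def edom_def by (auto simp: less_top)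
  then have "bounded (range u')" using bounded_edom bounded_subset by blast
  then obtain l r where r: "strict_mono r" "(u' \<circ> r) \<longlonglongrightarrow> l"
    using bounded_imp_convergent_subsequence by blast
  ultimately have lim: "(\<lambda>n. \<phi> ((u' \<circ> r) n)) \<longlonglongrightarrow> Inf (range \<phi>)"
    using LIMSEQ_subseq_LIMSEQ[OF _ r(1)] by (simp add: comp_def)
  have "\<phi> l \<le> Inf (range \<phi>)"
  proof (rule ccontr)
    assume "\<not> \<phi> l \<le> Inf (range \<phi>)"
    then have "Inf (range \<phi>) < \<phi> l" by simp
    then obtain t where t: "Inf (range \<phi>) < ereal t" "ereal t < \<phi> l"
      using ereal_dense2 by blast
    have "eventually (\<lambda>n. \<phi> ((u' \<circ> r) n) < ereal t) sequentially"
      using lim t(1) by (rule order_tendstoD)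
    then have "eventually (\<lambda>n. \<phi> ((u' \<circ> r) n) \<le> ereal t) sequentially"
      by (rule eventually_mono) simp
    then have "\<phi> l \<le> ereal t" unfolding \<phi>_def by (rule lsc_plus_continuous[OF q r(2)])
    then show False using t(2) by simp
  qed
  then show ?thesis unfolding \<phi>_def by (meson INF_lower UNIV_I order_trans)
qed

lemma prox_unique:
  assumes c: "c > 0"
    and u1: "\<forall>v. ereal (prox_quad x y c u1) + X u1 \<le> ereal (prox_quad x y c v) + X v"
    and u2: "\<forall>v. ereal (prox_quad x y c u2) + X u2 \<le> ereal (prox_quad x y c v) + X v"
  shows "u1 = u2"
proof -
  obtain v0 where v0: "X v0 \<noteq> \<infinity>" by (rule obtain_finite_point)
  have f1: "X u1 \<noteq> \<infinity>" using u1[rule_format, of v0] v0 by (cases "X v0") auto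
  have f2: "X u2 \<noteq> \<infinity>" using u2[rule_format, of v0] v0 by (cases "X v0") auto
  define w where "w = (1 - 1/2) *\<^sub>R u1 + (1/2::real) *\<^sub>R u2"
  have Xw: "X w \<le> ereal ((Xreal u1 + Xreal u2) / 2)"
    using X_convex_combination_le[of "1/2" u1 u2] f1 f2 unfolding w_def by (simp add: add_divide_distrib)
  have "ereal (prox_quad x y c ui) + X ui \<le> ereal (prox_quad x y c w) + ereal ((Xreal u1 + Xreal u2) / 2)"
    if "ui = u1 \<or> ui = u2" for ui
    using that u1 u2 add_left_mono[OF Xw] order_trans by blast
  from this[of u1] this[of u2]
  have "prox_quad x y c u1 + Xreal u1 \<le> prox_quad x y c w + (Xreal u1 + Xreal u2) / 2"
    "prox_quad x y c u2 + Xreal u2 \<le> prox_quad x y c w + (Xreal u1 + Xreal u2) / 2"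
    using X_eq_ereal[OF f1] X_eq_ereal[OF f2] by simp_all
  then have "prox_quad x y c u1 + prox_quad x y c u2 \<le> 2 * prox_quad x y c w"
    by (simp add: field_simps)
  moreover have "prox_quad x y c w
      = (prox_quad x y c u1 + prox_quad x y c u2) / 2 - (norm (u1 - u2))\<^sup>2 / (8 * c)"
    unfolding w_def prox_quad_convex_combination by (simp add: field_simps)
  ultimately have "(norm (u1 - u2))\<^sup>2 / (8 * c) \<le> 0"
    unfolding add_divide_distrib by linarith
  then show ?thesis using c by (simp add: divide_le_0_iff)
qed

lemma prox_map_minimizes:
  assumes "c > 0"
  shows "ereal (prox_quad x y c (prox_map X x y c)) + X (prox_map X x y c)
    \<le> ereal (prox_quad x y c v) + X v"
proof -
  have "prox_map X x y c = (THE u. \<forall>v. ereal (prox_quad x y c u) + X u \<le> ereal (prox_quad x y c v) + X v)"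
    unfolding prox_map_def prox_quad_def ..
  also have "\<forall>v. ereal (prox_quad x y c \<dots>) + X \<dots> \<le> ereal (prox_quad x y c v) + X v"
    by (rule theI') (use prox_exists prox_unique[OF assms] in blast)
  finally show ?thesis by blast
qed

lemma prox_map_finite:
  assumes "c > 0"
  shows "X (prox_map X x y c) \<noteq> \<infinity>"
proof -
  obtain v0 where v0: "X v0 \<noteq> \<infinity>" by (rule obtain_finite_point)
  then show ?thesis using prox_map_minimizes[OF assms, of x y v0] by (cases "X v0") auto
qed

text \<open>The quadratic term makes the prox objective strongly convex; comparing \<open>p\<close> with the points
  \<open>(1 - t) p + t u\<close> and letting \<open>t \<rightarrow> 0\<close> gives the extra term.\<close>

lemma prox_three_point:
  fixes x y :: 'a
  assumes c: "c > 0" and u: "X u \<noteq> \<infinity>"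
  defines "p \<equiv> prox_map X x y c"
  shows "prox_quad x y c p + Xreal p + (norm (u - p))\<^sup>2 / (2 * c) \<le> prox_quad x y c u + Xreal u"
proof (rule le_of_forall_convex_weight)
  fix t :: real assume t: "0 < t" "t < 1"
  have p: "X p \<noteq> \<infinity>" unfolding p_def using prox_map_finite[OF c] .
  define w where "w = (1 - t) *\<^sub>R p + t *\<^sub>R u"
  have "ereal (prox_quad x y c p) + X p \<le> ereal (prox_quad x y c w) + X w"
    unfolding p_def by (rule prox_map_minimizes[OF c])
  also have "\<dots> \<le> ereal (prox_quad x y c w) + ereal ((1 - t) * Xreal p + t * Xreal u)"
    using X_convex_combination_le[of t p u] t p u unfolding w_def by (intro add_left_mono) auto
  finally have "prox_quad x y c p + Xreal p \<le> prox_quad x y c w + ((1 - t) * Xreal p + t * Xreal u)"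
    using X_eq_ereal[OF p] by simp
  moreover have "prox_quad x y c w = (1 - t) * prox_quad x y c p + t * prox_quad x y c u
      - t * (1 - t) * (norm (u - p))\<^sup>2 / (2 * c)"
    unfolding w_def prox_quad_convex_combination by (simp add: norm_minus_commute)
  ultimately have "t * (prox_quad x y c p + Xreal p + (1 - t) * ((norm (u - p))\<^sup>2 / (2 * c)))
      \<le> t * (prox_quad x y c u + Xreal u)"
    by (simp add: algebra_simps)
  then show "prox_quad x y c p + Xreal p + (1 - t) * ((norm (u - p))\<^sup>2 / (2 * c))
      \<le> prox_quad x y c u + Xreal u"
    using t by simp
qed

lemma prox_map_lipschitz:
  assumes c: "c > 0"
  shows "norm (prox_map X x1 y1 c - prox_map X x2 y2 c) \<le> norm (x1 - x2) + c * norm (y1 - y2)"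
proof -
  define p1 where "p1 = prox_map X x1 y1 c"
  define p2 where "p2 = prox_map X x2 y2 c"
  define v where "v = (x1 - x2) - c *\<^sub>R (y1 - y2)"
  have "prox_quad x1 y1 c p1 + Xreal p1 + (norm (p2 - p1))\<^sup>2 / (2 * c) \<le> prox_quad x1 y1 c p2 + Xreal p2"
    unfolding p1_def by (rule prox_three_point[OF c]) (simp add: p2_def prox_map_finite[OF c])
  moreover have "prox_quad x2 y2 c p2 + Xreal p2 + (norm (p1 - p2))\<^sup>2 / (2 * c) \<le> prox_quad x2 y2 c p1 + Xreal p1"
    unfolding p2_def by (rule prox_three_point[OF c]) (simp add: p1_def prox_map_finite[OF c])
  ultimately have "(norm (p1 - p2))\<^sup>2 / c \<le> inner (p1 - p2) v / c"
    using prox_quad_cross_difference[OF c, of x1 y1 p2 p1 x2 y2] unfolding v_def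
    by (simp add: norm_minus_commute field_simps)
  then have "(norm (p1 - p2))\<^sup>2 \<le> inner (p1 - p2) v"
    using c by (simp add: divide_le_cancel)
  also have "\<dots> \<le> norm (p1 - p2) * norm v" by (rule norm_cauchy_schwarz)
  finally have "norm (p1 - p2) \<le> norm v"
    by (metis mult_le_cancel_left norm_ge_zero not_le power2_eq_square zero_less_norm_iff dual_order.trans order_refl)
  also have "norm v \<le> norm (x1 - x2) + c * norm (y1 - y2)"
    using norm_triangle_ineq4[of "x1 - x2" "c *\<^sub>R (y1 - y2)"] c unfolding v_def by simp
  finally show ?thesis unfolding p1_def p2_def .
qed

lemma continuous_on_prox_map:
  assumes c: "c > 0"
  shows "continuous_on UNIV (\<lambda>z. prox_map X (fst z) (snd z) c)"
proof -
  have "(1 + c)-lipschitz_on UNIV (\<lambda>z. prox_map X (fst z) (snd z) c)"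
  proof (rule lipschitz_onI)
    fix z w :: "'a \<times> 'a"
    have "norm (fst z - fst w) \<le> dist z w" "norm (snd z - snd w) \<le> dist z w"
      using dist_fst_le[of z w] dist_snd_le[of z w] by (simp_all add: dist_norm)
    moreover have "c * norm (snd z - snd w) \<le> c * dist z w"
      using c calculation(2) by (intro mult_left_mono) auto
    ultimately have "norm (fst z - fst w) + c * norm (snd z - snd w) \<le> (1 + c) * dist z w"
      by (simp add: algebra_simps)
    then show "dist (prox_map X (fst z) (snd z) c) (prox_map X (fst w) (snd w) c) \<le> (1 + c) * dist z w"
      unfolding dist_norm[of "prox_map X _ _ c"] by (rule order_trans[OF prox_map_lipschitz[OF c]])
  qed (use c in simp)
  then show ?thesis by (rule lipschitz_on_continuous_on)
qed

lemma norm_grad_map_diff_le: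
  assumes c: "c > 0"
  shows "norm (grad_map X x y1 c - grad_map X x y2 c) \<le> norm (y1 - y2)"
proof -
  have "grad_map X x y1 c - grad_map X x y2 c = (1 / c) *\<^sub>R (prox_map X x y2 c - prox_map X x y1 c)"
    unfolding grad_map_def by (simp add: algebra_simps)
  then have "norm (grad_map X x y1 c - grad_map X x y2 c) = norm (prox_map X x y2 c - prox_map X x y1 c) / c"
    using c by simp
  also have "\<dots> \<le> c * norm (y2 - y1) / c"
    using prox_map_lipschitz[OF c, of x y2 x y1] c by (intro divide_right_mono) auto
  finally show ?thesis using c by (simp add: norm_minus_commute)
qed

lemma borel_measurable_prox_map:
  assumes "a \<in> borel_measurable N" "b \<in> borel_measurable N" "c > 0"
  shows "(\<lambda>w. prox_map X (a w) (b w) c) \<in> borel_measurable N"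
  using borel_measurable_continuous_on[OF continuous_on_prox_map[OF assms(3)] borel_measurable_Pair[OF assms(1,2)]]
  by simp

end

section \<open>Functions with Lipschitz gradient\<close>

lemma has_real_derivative_along_line:
  fixes f :: "'a::real_inner \<Rightarrow> real"
  assumes "\<And>z. GDERIV f z :> g z"
  shows "((\<lambda>t. f (x + t *\<^sub>R d)) has_real_derivative inner d (g (x + t *\<^sub>R d))) (at t)"
proof -
  have "((\<lambda>t. x + t *\<^sub>R d) has_derivative (\<lambda>s. s *\<^sub>R d)) (at t)"
    by (auto intro!: derivative_eq_intros)
  from has_derivative_compose[OF this assms[of "x + t *\<^sub>R d", unfolded gderiv_def]]
  have "((\<lambda>t. f (x + t *\<^sub>R d)) has_derivative (\<lambda>s. s * inner d (g (x + t *\<^sub>R d)))) (at t)"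
    by simp
  moreover have "(\<lambda>s. s * inner d (g (x + t *\<^sub>R d))) = (*) (inner d (g (x + t *\<^sub>R d)))"
    by (auto simp: fun_eq_iff)
  ultimately show ?thesis unfolding has_field_derivative_def by simp
qed

lemma lipschitz_gradient_upper_bound:
  fixes f :: "'a::real_inner \<Rightarrow> real"
  assumes gd: "\<And>z. GDERIV f z :> g z" and lip: "L-lipschitz_on UNIV g"
  shows "f y \<le> f x + inner (g x) (y - x) + L / 2 * (norm (y - x))\<^sup>2"
proof -
  define d where "d = y - x"
  define \<psi> where "\<psi> t = f (x + t *\<^sub>R d) - t * inner (g x) d - L / 2 * t\<^sup>2 * (norm d)\<^sup>2" for t
  have "\<psi> 1 \<le> \<psi> 0"
  proof (rule DERIV_nonpos_imp_nonincreasing[of 0 1 \<psi>])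
    fix t :: real assume t: "0 \<le> t" "t \<le> 1"
    have D: "(\<psi> has_real_derivative (inner d (g (x + t *\<^sub>R d)) - inner (g x) d - L * t * (norm d)\<^sup>2)) (at t)"
      unfolding \<psi>_def
      by (rule derivative_eq_intros has_real_derivative_along_line[OF gd] refl | simp)+
    have "inner d (g (x + t *\<^sub>R d)) - inner (g x) d = inner d (g (x + t *\<^sub>R d) - g x)"
      by (simp add: inner_diff_right inner_commute)
    also have "\<dots> \<le> norm d * norm (g (x + t *\<^sub>R d) - g x)"
      by (rule norm_cauchy_schwarz)
    also have "\<dots> \<le> norm d * (L * (t * norm d))"
      using lipschitz_on_normD[OF lip, of "x + t *\<^sub>R d" x] t by (intro mult_left_mono) auto
    finally have "inner d (g (x + t *\<^sub>R d)) - inner (g x) d - L * t * (norm d)\<^sup>2 \<le> 0"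
      by (simp add: power2_eq_square algebra_simps)
    with D show "\<exists>y. (\<psi> has_real_derivative y) (at t) \<and> y \<le> 0" by blast
  qed simp
  then show ?thesis unfolding \<psi>_def d_def by (simp add: inner_commute)
qed

lemma lipschitz_gradient_lower_bound:
  fixes f :: "'a::real_inner \<Rightarrow> real"
  assumes gd: "\<And>z. GDERIV f z :> g z" and lip: "L-lipschitz_on UNIV g"
  shows "f x + inner (g x) (y - x) - L / 2 * (norm (y - x))\<^sup>2 \<le> f y"
proof -
  have "GDERIV (\<lambda>x. - f x) z :> - g z" for z
    using has_derivative_minus[OF gd[of z, unfolded gderiv_def]] unfolding gderiv_def by simp
  moreover have "L-lipschitz_on UNIV (\<lambda>x. - g x)" using lip by simp
  ultimately show ?thesis
    using lipschitz_gradient_upper_bound[of "\<lambda>x. - f x" "\<lambda>x. - g x" L y x] by simp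
qed

lemma convex_on_gradient_inequality:
  fixes h :: "'a::real_inner \<Rightarrow> real"
  assumes cv: "convex_on UNIV h" and gd: "\<And>z. GDERIV h z :> g z"
  shows "h x + inner (g x) (y - x) \<le> h y"
proof -
  define d where "d = y - x"
  define \<phi> where "\<phi> t = h (x + t *\<^sub>R d)" for t
  have "convex_on UNIV \<phi>"
  proof (rule convex_onI)
    fix t a b :: real assume t: "0 < t" "t < 1"
    have "x + ((1 - t) *\<^sub>R a + t *\<^sub>R b) *\<^sub>R d = (1 - t) *\<^sub>R (x + a *\<^sub>R d) + t *\<^sub>R (x + b *\<^sub>R d)"
      by (simp add: algebra_simps)
    then show "\<phi> ((1 - t) *\<^sub>R a + t *\<^sub>R b) \<le> (1 - t) * \<phi> a + t * \<phi> b"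
      unfolding \<phi>_def using convex_onD[OF cv, of t "x + a *\<^sub>R d" "x + b *\<^sub>R d"] t by simp
  qed simp
  moreover have "(\<phi> has_real_derivative inner d (g x)) (at 0 within UNIV)"
    unfolding \<phi>_def using has_real_derivative_along_line[OF gd, of x d 0] by simp
  ultimately have "\<phi> 1 - \<phi> 0 \<ge> inner d (g x) * (1 - 0)"
    by (intro convex_on_imp_above_tangent) auto
  then show ?thesis unfolding \<phi>_def d_def by (simp add: inner_commute)
qed

section \<open>One step of the accelerated method\<close>

locale composite_problem = prox_regularizer X for X :: "'a::euclidean_space \<Rightarrow> ereal" +
  fixes f h :: "'a \<Rightarrow> real" and gf gh :: "'a \<Rightarrow> 'a" and Lf Lh :: real
  assumes f_grad: "\<And>x. GDERIV f x :> gf x"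
    and f_lip: "Lf-lipschitz_on UNIV gf"
    and h_convex: "convex_on UNIV h"
    and h_grad: "\<And>x. GDERIV h x :> gh x"
    and h_lip: "Lh-lipschitz_on UNIV gh"
    and L_pos: "Lf + Lh > 0"
begin

abbreviation "L \<equiv> Lf + Lh"

definition Psi :: "'a \<Rightarrow> real" where "Psi x = f x + h x"
definition grad_Psi :: "'a \<Rightarrow> 'a" where "grad_Psi x = gf x + gh x"

lemma Lf_nonneg: "Lf \<ge> 0" using f_lip lipschitz_on_nonneg by blast

lemma continuous_on_grad_Psi: "continuous_on UNIV grad_Psi"
  unfolding grad_Psi_def[abs_def]
  using lipschitz_on_continuous_on[OF f_lip] lipschitz_on_continuous_on[OF h_lip]
  by (intro continuous_intros)

lemma Psi_upper_bound: "Psi y \<le> Psi x + inner (grad_Psi x) (y - x) + L / 2 * (norm (y - x))\<^sup>2"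
  using lipschitz_gradient_upper_bound[OF f_grad f_lip, of y x]
    lipschitz_gradient_upper_bound[OF h_grad h_lip, of y x]
  unfolding Psi_def grad_Psi_def by (simp add: inner_add_left algebra_simps add_divide_distrib)

text \<open>Only \<open>f\<close> contributes a curvature term: \<open>h\<close> is convex.\<close>

lemma Psi_lower_bound: "Psi x + inner (grad_Psi x) (z - x) \<le> Psi z + Lf / 2 * (norm (z - x))\<^sup>2"
  using lipschitz_gradient_lower_bound[OF f_grad f_lip, of x z]
    convex_on_gradient_inequality[OF h_convex h_grad, of x z]
  unfolding Psi_def grad_Psi_def by (simp add: inner_add_left algebra_simps)

lemma Psi_lower_bound_convex_combination:
  fixes a xp z :: 'a
  assumes \<alpha>: "0 \<le> \<alpha>" "\<alpha> \<le> 1"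
  defines "m \<equiv> (1 - \<alpha>) *\<^sub>R a + \<alpha> *\<^sub>R xp"
  shows "Psi m + \<alpha> * inner (grad_Psi m) (z - xp)
    \<le> (1 - \<alpha>) * Psi a + \<alpha> * Psi z + Lf / 2 * ((1 - \<alpha>) * (norm (a - m))\<^sup>2 + \<alpha> * (norm (z - m))\<^sup>2)"
proof -
  have "(1 - \<alpha>) *\<^sub>R (a - m) + \<alpha> *\<^sub>R (z - m) = \<alpha> *\<^sub>R (z - xp)"
    unfolding m_def by (simp add: algebra_simps)
  then have "\<alpha> * inner (grad_Psi m) (z - xp)
      = (1 - \<alpha>) * inner (grad_Psi m) (a - m) + \<alpha> * inner (grad_Psi m) (z - m)"
    by (metis inner_add_right inner_scaleR_right)
  then have "Psi m + \<alpha> * inner (grad_Psi m) (z - xp)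
      = (1 - \<alpha>) * (Psi m + inner (grad_Psi m) (a - m)) + \<alpha> * (Psi m + inner (grad_Psi m) (z - m))"
    by (simp add: algebra_simps)
  also have "\<dots> \<le> (1 - \<alpha>) * (Psi a + Lf / 2 * (norm (a - m))\<^sup>2) + \<alpha> * (Psi z + Lf / 2 * (norm (z - m))\<^sup>2)"
    using \<alpha> by (intro add_mono[OF mult_left_mono mult_left_mono] Psi_lower_bound) auto
  also have "\<dots> = (1 - \<alpha>) * Psi a + \<alpha> * Psi z + Lf / 2 * ((1 - \<alpha>) * (norm (a - m))\<^sup>2 + \<alpha> * (norm (z - m))\<^sup>2)"
    by (simp add: algebra_simps diff_divide_distrib)
  finally show ?thesis .
qed

lemma prox_gradient_step:
  fixes m G u :: 'a
  assumes u: "X u \<noteq> \<infinity>"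
  defines "p \<equiv> prox_map X m G (1 / (2 * L))"
  shows "Psi p + Xreal p \<le> Psi m + inner G (u - m) + L * (norm (u - m))\<^sup>2 + Xreal u
    - 3 * L / 8 * (norm (p - m))\<^sup>2 + 2 / L * (norm (G - grad_Psi m))\<^sup>2"
proof -
  have "prox_quad m G (1 / (2 * L)) p + Xreal p + (norm (u - p))\<^sup>2 / (2 * (1 / (2 * L)))
      \<le> prox_quad m G (1 / (2 * L)) u + Xreal u"
    unfolding p_def by (rule prox_three_point[OF _ u]) (use L_pos in simp)
  moreover have "0 \<le> (norm (u - p))\<^sup>2 / (2 * (1 / (2 * L)))" using L_pos by simp
  ultimately have "prox_quad m G (1 / (2 * L)) p + Xreal p \<le> prox_quad m G (1 / (2 * L)) u + Xreal u"
    by linarith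
  moreover have "1 / (2 * (1 / (2 * L))) = L" by simp
  ultimately have quad: "inner G p + L * (norm (p - m))\<^sup>2 + Xreal p \<le> inner G u + L * (norm (u - m))\<^sup>2 + Xreal u"
    unfolding prox_quad_def by (simp only:)
  have "inner (p - m) (grad_Psi m - G)
      \<le> L / 4 / 2 * (norm (p - m))\<^sup>2 + 1 / (2 * (L / 4)) * (norm (grad_Psi m - G))\<^sup>2"
    by (rule young_inner) (use L_pos in simp)
  moreover have "L / 4 / 2 = L / 8" "1 / (2 * (L / 4)) = 2 / L"
    "norm (grad_Psi m - G) = norm (G - grad_Psi m)"
    using L_pos by (simp_all add: norm_minus_commute field_simps)
  ultimately have "inner (p - m) (grad_Psi m - G) \<le> L / 8 * (norm (p - m))\<^sup>2 + 2 / L * (norm (G - grad_Psi m))\<^sup>2"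
    by (simp only:)
  moreover have "inner (p - m) (grad_Psi m - G) = inner (grad_Psi m) (p - m) - inner G p + inner G m"
    "inner G (u - m) = inner G u - inner G m"
    by (simp_all add: inner_diff_left inner_diff_right inner_commute)
  moreover have "Psi p \<le> Psi m + inner (grad_Psi m) (p - m) + L / 2 * (norm (p - m))\<^sup>2"
    by (rule Psi_upper_bound)
  ultimately show ?thesis using quad by linarith
qed

lemma accelerated_step:
  fixes a xp G z :: 'a and \<alpha> c :: real
  assumes \<alpha>: "0 < \<alpha>" "\<alpha> \<le> 1" and c: "c > 0" and \<alpha>c: "\<alpha> * c \<le> 1 / (2 * L)"
    and z: "X z \<noteq> \<infinity>" and a: "\<alpha> < 1 \<Longrightarrow> X a \<noteq> \<infinity>"
  defines "m \<equiv> (1 - \<alpha>) *\<^sub>R a + \<alpha> *\<^sub>R xp"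
  defines "xn \<equiv> prox_map X xp G c"
  defines "an \<equiv> prox_map X m G (1 / (2 * L))"
  shows "Psi an + Xreal an \<le> (1 - \<alpha>) * (Psi a + Xreal a) + \<alpha> * (Psi z + Xreal z)
      + \<alpha> / (2 * c) * ((norm (z - xp))\<^sup>2 - (norm (z - xn))\<^sup>2)
      + Lf / 2 * ((1 - \<alpha>) * (norm (a - m))\<^sup>2 + \<alpha> * (norm (z - m))\<^sup>2)
      - 3 * L / 8 * (norm (an - m))\<^sup>2 + 2 / L * (norm (G - grad_Psi m))\<^sup>2
      + \<alpha> * inner (G - grad_Psi m) (z - xp)"
proof -
  define u where "u = (1 - \<alpha>) *\<^sub>R a + \<alpha> *\<^sub>R xn"
  have xn: "X xn \<noteq> \<infinity>" unfolding xn_def by (rule prox_map_finite[OF c])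
  have "X u \<le> ereal ((1 - \<alpha>) * Xreal a + \<alpha> * Xreal xn)"
    unfolding u_def by (rule X_convex_combination_le) (use \<alpha> a xn in auto)
  moreover from this have u: "X u \<noteq> \<infinity>" by auto
  ultimately have Xu: "Xreal u \<le> (1 - \<alpha>) * Xreal a + \<alpha> * Xreal xn"
    using X_eq_ereal[OF u] by simp
  have "u - m = \<alpha> *\<^sub>R (xn - xp)" unfolding u_def m_def by (simp add: algebra_simps)
  then have descent: "Psi an + Xreal an \<le> Psi m + \<alpha> * inner G (xn - xp) + L * \<alpha>\<^sup>2 * (norm (xn - xp))\<^sup>2
      + Xreal u - 3 * L / 8 * (norm (an - m))\<^sup>2 + 2 / L * (norm (G - grad_Psi m))\<^sup>2"
    using prox_gradient_step[OF u, of m G] \<alpha> unfolding an_def[symmetric]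
    by (simp add: power_mult_distrib abs_of_pos)
  have "prox_quad xp G c xn + Xreal xn + (norm (z - xn))\<^sup>2 / (2 * c) \<le> prox_quad xp G c z + Xreal z"
    unfolding xn_def by (rule prox_three_point[OF c z])
  then have "\<alpha> * (prox_quad xp G c xn + Xreal xn + (norm (z - xn))\<^sup>2 / (2 * c))
      \<le> \<alpha> * (prox_quad xp G c z + Xreal z)"
    using \<alpha> by (intro mult_left_mono) auto
  then have three: "\<alpha> * inner G (xn - xp) + \<alpha> * Xreal xn + \<alpha> / (2 * c) * (norm (xn - xp))\<^sup>2
      \<le> \<alpha> * inner G (z - xp) + \<alpha> * Xreal z + \<alpha> / (2 * c) * ((norm (z - xp))\<^sup>2 - (norm (z - xn))\<^sup>2)"
    unfolding prox_quad_def by (simp add: inner_diff_right algebra_simps)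
  \<comment> \<open>the step-size condition \<open>\<alpha> c \<le> 1/(2L)\<close> lets the three-point term absorb the penalty \<open>L |u - m|\<^sup>2\<close>\<close>
  have "2 * L * (\<alpha> * c) \<le> 1" using \<alpha>c L_pos by (simp add: field_simps)
  then have "\<alpha> * (2 * L * (\<alpha> * c)) \<le> \<alpha>" using \<alpha> by (simp add: mult_left_le)
  then have "L * \<alpha>\<^sup>2 \<le> \<alpha> / (2 * c)" using c by (simp add: power2_eq_square field_simps)
  then have absorbed: "L * \<alpha>\<^sup>2 * (norm (xn - xp))\<^sup>2 \<le> \<alpha> / (2 * c) * (norm (xn - xp))\<^sup>2"
    by (rule mult_right_mono) simp
  have "Psi m + \<alpha> * inner (grad_Psi m) (z - xp)
      \<le> (1 - \<alpha>) * Psi a + \<alpha> * Psi z + Lf / 2 * ((1 - \<alpha>) * (norm (a - m))\<^sup>2 + \<alpha> * (norm (z - m))\<^sup>2)"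
    unfolding m_def using \<alpha> by (intro Psi_lower_bound_convex_combination) auto
  moreover have "inner G (z - xp) = inner (grad_Psi m) (z - xp) + inner (G - grad_Psi m) (z - xp)"
    by (simp add: inner_diff_left)
  ultimately show ?thesis using descent three absorbed Xu by (simp add: algebra_simps)
qed

end

section \<open>Pathwise analysis of the iterates\<close>

definition rsag_weight :: "nat \<Rightarrow> real" where
  "rsag_weight k = real k * (real k + 1) / 2"

lemma inverse_rsag_Gamma: "inverse (rsag_Gamma k) = rsag_weight k"
  unfolding rsag_Gamma_def rsag_weight_def by simp

lemma rsag_weight_nonneg: "rsag_weight k \<ge> 0"
  unfolding rsag_weight_def by simp

lemma rsag_beta_eq: "rsag_beta L k = 1 / (2 * L)"
  unfolding rsag_beta_def ..

lemma rsag_alpha_1: "rsag_alpha 1 = 1"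
  unfolding rsag_alpha_def by simp

lemma rsag_alpha_bounds: "k \<ge> 1 \<Longrightarrow> 0 < rsag_alpha k \<and> rsag_alpha k \<le> 1"
  unfolding rsag_alpha_def by (auto simp: field_simps)

lemma rsag_lambda_pos: "L > 0 \<Longrightarrow> k \<ge> 1 \<Longrightarrow> rsag_lambda L k > 0"
  unfolding rsag_lambda_def rsag_beta_def by simp

lemma rsag_alpha_mult_lambda_le:
  assumes "L > 0"
  shows "rsag_alpha k * rsag_lambda L k \<le> 1 / (2 * L)"
proof -
  have "rsag_alpha k * rsag_lambda L k = real k / (real k + 1) * (1 / (2 * L))"
    unfolding rsag_alpha_def rsag_lambda_def rsag_beta_def by (simp add: divide_simps)
  also have "\<dots> \<le> 1 * (1 / (2 * L))"
    using assms by (intro mult_right_mono) auto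
  finally show ?thesis by simp
qed

lemma rsag_weight_mult_one_minus_alpha: "k \<ge> 1 \<Longrightarrow> rsag_weight k * (1 - rsag_alpha k) = rsag_weight (k - 1)"
  unfolding rsag_weight_def rsag_alpha_def by (cases k) (auto simp: field_simps)

lemma rsag_weight_mult_alpha: "rsag_weight k * rsag_alpha k = real k"
  unfolding rsag_weight_def rsag_alpha_def by (simp add: field_simps add_pos_pos)

lemma rsag_weight_mult_alpha_div_lambda:
  assumes "k \<ge> 1"
  shows "rsag_weight k * (rsag_alpha k / (2 * rsag_lambda L k)) = 2 * L"
proof -
  have "rsag_weight k * (rsag_alpha k / (2 * rsag_lambda L k)) = rsag_weight k * rsag_alpha k / (2 * rsag_lambda L k)"
    by simp
  also have "\<dots> = real k / (real k / (2 * L))"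
    unfolding rsag_weight_mult_alpha rsag_lambda_def rsag_beta_def by simp
  finally show ?thesis using assms by simp
qed

lemma sum_rsag_weight: "(\<Sum>k = 1..N. rsag_weight k) = real N * (real N + 1) * (real N + 2) / 6"
  unfolding rsag_weight_def by (induction N) (auto simp: field_simps)

lemma sum_of_nat_atLeastAtMost: "(\<Sum>k = 1..N. real k) = real N * (real N + 1) / 2"
  by (induction N) (auto simp: field_simps)

lemma rsag_prob_eq:
  assumes "L > 0"
  shows "rsag_prob L N k = rsag_weight k / (\<Sum>j = 1..N. rsag_weight j)"
proof -
  have c: "rsag_weight j * rsag_beta L j * (1 - L * rsag_beta L j) = rsag_weight j * (1 / (4 * L))" for j
    using assms unfolding rsag_beta_def by (simp add: field_simps)
  show ?thesis
    using assms unfolding rsag_prob_def inverse_rsag_Gamma c sum_distrib_right[symmetric] by simp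
qed

locale rsag_trajectory = composite_problem X f h gf gh Lf Lh
  for X :: "'a::euclidean_space \<Rightarrow> ereal" and f h gf gh Lf Lh +
  fixes M :: real and G :: "'a \<Rightarrow> 'b \<Rightarrow> 'a" and \<sigma> Dt :: real and x0 z :: 'a
  assumes prox_map_bounded: "\<And>x y c. c > 0 \<Longrightarrow> norm (prox_map X x y c) \<le> M"
    and z_optimal: "\<And>x. ereal (f z + h z) + X z \<le> ereal (f x + h x) + X x"
begin

definition xk :: "(nat \<times> nat \<Rightarrow> 'b) \<Rightarrow> nat \<Rightarrow> 'a" where
  "xk \<omega> n = fst (rsag_state X G L \<sigma> Dt x0 \<omega> n)"

definition xag :: "(nat \<times> nat \<Rightarrow> 'b) \<Rightarrow> nat \<Rightarrow> 'a" where
  "xag \<omega> n = snd (rsag_state X G L \<sigma> Dt x0 \<omega> n)"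

definition xmd :: "(nat \<times> nat \<Rightarrow> 'b) \<Rightarrow> nat \<Rightarrow> 'a" where
  "xmd \<omega> k = rsag_xmd X G L \<sigma> Dt x0 \<omega> k"

definition batch :: "nat \<Rightarrow> nat" where "batch k = rsag_batch \<sigma> L Dt k"

definition Gbar :: "(nat \<times> nat \<Rightarrow> 'b) \<Rightarrow> nat \<Rightarrow> 'a" where
  "Gbar \<omega> k = (1 / real (batch k)) *\<^sub>R (\<Sum>i = 1..batch k. G (xmd \<omega> k) (\<omega> (k, i)))"

definition noise :: "(nat \<times> nat \<Rightarrow> 'b) \<Rightarrow> nat \<Rightarrow> 'a" where
  "noise \<omega> k = Gbar \<omega> k - grad_Psi (xmd \<omega> k)"

definition grad_map_md :: "(nat \<times> nat \<Rightarrow> 'b) \<Rightarrow> nat \<Rightarrow> 'a" where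
  "grad_map_md \<omega> k = grad_map X (xmd \<omega> k) (grad_Psi (xmd \<omega> k)) (1 / (2 * L))"

definition gap :: "(nat \<times> nat \<Rightarrow> 'b) \<Rightarrow> nat \<Rightarrow> real" where
  "gap \<omega> n = Psi (xag \<omega> n) + Xreal (xag \<omega> n) - (Psi z + Xreal z)"

definition curvature_term :: "(nat \<times> nat \<Rightarrow> 'b) \<Rightarrow> nat \<Rightarrow> real" where
  "curvature_term \<omega> k = (1 - rsag_alpha k) * (norm (xag \<omega> (k - 1) - xmd \<omega> k))\<^sup>2
     + rsag_alpha k * (norm (z - xmd \<omega> k))\<^sup>2"

definition step_error :: "(nat \<times> nat \<Rightarrow> 'b) \<Rightarrow> nat \<Rightarrow> real" where
  "step_error \<omega> k = Lf / 2 * curvature_term \<omega> k + 2 / L * (norm (noise \<omega> k))\<^sup>2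
     + rsag_alpha k * inner (noise \<omega> k) (z - xk \<omega> (k - 1))"

definition radius_sq :: real where "radius_sq = (norm z)\<^sup>2 + 2 * M\<^sup>2"

lemma xk_0: "xk \<omega> 0 = x0" and xag_0: "xag \<omega> 0 = x0"
  unfolding xk_def xag_def by simp_all

lemma xmd_eq: "xmd \<omega> k = (1 - rsag_alpha k) *\<^sub>R xag \<omega> (k - 1) + rsag_alpha k *\<^sub>R xk \<omega> (k - 1)"
  unfolding xmd_def rsag_xmd_def xag_def xk_def by (simp add: case_prod_beta Let_def)

lemma xk_Suc: "xk \<omega> (Suc n) = prox_map X (xk \<omega> n) (Gbar \<omega> (Suc n)) (rsag_lambda L (Suc n))"
  and xag_Suc: "xag \<omega> (Suc n) = prox_map X (xmd \<omega> (Suc n)) (Gbar \<omega> (Suc n)) (1 / (2 * L))"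
  unfolding xk_def xag_def Gbar_def xmd_def batch_def rsag_xmd_def
  by (simp_all add: case_prod_beta Let_def rsag_beta_eq)

lemma xmd_1: "xmd \<omega> 1 = x0"
  unfolding xmd_eq rsag_alpha_1 by (simp add: xk_0)

lemma M_nonneg: "M \<ge> 0"
  using prox_map_bounded[of 1 x0 x0] norm_ge_zero[of "prox_map X x0 x0 1"] by linarith

lemma norm_xk_le: "n \<ge> 1 \<Longrightarrow> norm (xk \<omega> n) \<le> M"
  using L_pos by (cases n) (auto simp: xk_Suc intro!: prox_map_bounded rsag_lambda_pos)

lemma norm_xag_le: "n \<ge> 1 \<Longrightarrow> norm (xag \<omega> n) \<le> M"
  using L_pos by (cases n) (auto simp: xag_Suc intro!: prox_map_bounded)

lemma norm_xk_le_initial: "norm (xk \<omega> n) \<le> norm x0 + M"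
proof (cases "n = 0")
  case False
  then have "norm (xk \<omega> n) \<le> M" by (simp add: norm_xk_le)
  then show ?thesis using norm_ge_zero[of x0] by linarith
qed (simp add: xk_0 M_nonneg)

lemma xag_finite: "n \<ge> 1 \<Longrightarrow> X (xag \<omega> n) \<noteq> \<infinity>"
  using L_pos by (cases n) (auto simp: xag_Suc intro!: prox_map_finite)

lemma norm_xmd_le:
  assumes k: "k \<ge> 2"
  shows "norm (xmd \<omega> k) \<le> M"
proof -
  have \<alpha>: "0 < rsag_alpha k" "rsag_alpha k \<le> 1" using rsag_alpha_bounds[of k] k by auto
  have "norm (xmd \<omega> k) \<le> norm ((1 - rsag_alpha k) *\<^sub>R xag \<omega> (k - 1)) + norm (rsag_alpha k *\<^sub>R xk \<omega> (k - 1))"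
    unfolding xmd_eq by (rule norm_triangle_ineq)
  also have "\<dots> = (1 - rsag_alpha k) * norm (xag \<omega> (k - 1)) + rsag_alpha k * norm (xk \<omega> (k - 1))"
    using \<alpha> by simp
  also have "\<dots> \<le> (1 - rsag_alpha k) * M + rsag_alpha k * M"
    using \<alpha> k norm_xag_le[of "k - 1" \<omega>] norm_xk_le[of "k - 1" \<omega>]
    by (intro add_mono mult_left_mono) auto
  finally show ?thesis by (simp add: algebra_simps)
qed

lemma z_finite: "X z \<noteq> \<infinity>"
proof -
  obtain v where v: "X v \<noteq> \<infinity>" by (rule obtain_finite_point)
  then show ?thesis using z_optimal[of v] by (cases "X v") auto
qed

lemma gap_nonneg: "n \<ge> 1 \<Longrightarrow> gap \<omega> n \<ge> 0"
  using z_optimal[of "xag \<omega> n"] X_eq_ereal[OF z_finite] X_eq_ereal[OF xag_finite, of n \<omega>]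
  unfolding gap_def Psi_def by simp

lemma gap_recursion:
  assumes k: "k \<ge> 1"
  shows "gap \<omega> k \<le> (1 - rsag_alpha k) * gap \<omega> (k - 1)
     + rsag_alpha k / (2 * rsag_lambda L k) * ((norm (z - xk \<omega> (k - 1)))\<^sup>2 - (norm (z - xk \<omega> k))\<^sup>2)
     + step_error \<omega> k - 3 * L / 8 * (norm (xag \<omega> k - xmd \<omega> k))\<^sup>2"
proof -
  obtain n where n: "k = Suc n" using k by (cases k) auto
  \<comment> \<open>\<open>x0\<close> may lie outside the domain of \<open>X\<close>; it enters only for \<open>k = 1\<close>, with weight \<open>1 - \<alpha>\<^sub>1 = 0\<close>\<close>
  have "rsag_alpha k < 1 \<Longrightarrow> X (xag \<omega> n) \<noteq> \<infinity>"
    using n rsag_alpha_1 xag_finite[of n] by (cases n) auto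
  from accelerated_step[OF _ _ rsag_lambda_pos[OF L_pos k] rsag_alpha_mult_lambda_le[OF L_pos] z_finite this,
      of "xk \<omega> n" "Gbar \<omega> k"]
  show ?thesis
    using rsag_alpha_bounds[OF k]
    unfolding gap_def step_error_def curvature_term_def noise_def n xk_Suc xag_Suc xmd_eq[of \<omega> "Suc n"]
    by (simp add: algebra_simps)
qed

lemma telescoped_recursion:
  "rsag_weight n * gap \<omega> n + 2 * L * (norm (z - xk \<omega> n))\<^sup>2
     + (\<Sum>k = 1..n. rsag_weight k * (3 * L / 8 * (norm (xag \<omega> k - xmd \<omega> k))\<^sup>2))
   \<le> 2 * L * (norm (z - x0))\<^sup>2 + (\<Sum>k = 1..n. rsag_weight k * step_error \<omega> k)"
proof (induction n)
  case 0
  then show ?case by (simp add: rsag_weight_def xk_0)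
next
  case (Suc n)
  define k where "k = Suc n"
  have k: "k \<ge> 1" unfolding k_def by simp
  have "rsag_weight k * gap \<omega> k \<le> rsag_weight k * ((1 - rsag_alpha k) * gap \<omega> (k - 1)
     + rsag_alpha k / (2 * rsag_lambda L k) * ((norm (z - xk \<omega> (k - 1)))\<^sup>2 - (norm (z - xk \<omega> k))\<^sup>2)
     + step_error \<omega> k - 3 * L / 8 * (norm (xag \<omega> k - xmd \<omega> k))\<^sup>2)"
    by (rule mult_left_mono[OF gap_recursion[OF k] rsag_weight_nonneg])
  also have "\<dots> = rsag_weight (k - 1) * gap \<omega> (k - 1)
     + 2 * L * ((norm (z - xk \<omega> (k - 1)))\<^sup>2 - (norm (z - xk \<omega> k))\<^sup>2)
     + rsag_weight k * step_error \<omega> k - rsag_weight k * (3 * L / 8 * (norm (xag \<omega> k - xmd \<omega> k))\<^sup>2)"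
    unfolding rsag_weight_mult_one_minus_alpha[OF k, symmetric]
      rsag_weight_mult_alpha_div_lambda[OF k, of L, symmetric]
    by (simp add: algebra_simps)
  finally show ?case using Suc.IH unfolding k_def by (simp add: algebra_simps)
qed

lemma norm_grad_map_md_le:
  assumes k: "k \<ge> 1"
  shows "(norm (grad_map_md \<omega> k))\<^sup>2 \<le> 8 * L\<^sup>2 * (norm (xag \<omega> k - xmd \<omega> k))\<^sup>2 + 2 * (norm (noise \<omega> k))\<^sup>2"
proof -
  obtain n where n: "k = Suc n" using k by (cases k) auto
  have "grad_map X (xmd \<omega> k) (Gbar \<omega> k) (1 / (2 * L)) = (2 * L) *\<^sub>R (xmd \<omega> k - xag \<omega> k)"
    unfolding grad_map_def n xag_Suc by simp
  then have "norm (grad_map_md \<omega> k)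
      \<le> norm ((2 * L) *\<^sub>R (xmd \<omega> k - xag \<omega> k)) + norm (grad_map_md \<omega> k - grad_map X (xmd \<omega> k) (Gbar \<omega> k) (1 / (2 * L)))"
    by (metis norm_triangle_sub)
  also have "\<dots> \<le> 2 * L * norm (xag \<omega> k - xmd \<omega> k) + norm (noise \<omega> k)"
    using norm_grad_map_diff_le[of "1 / (2 * L)" "xmd \<omega> k" "grad_Psi (xmd \<omega> k)" "Gbar \<omega> k"] L_pos
    unfolding grad_map_md_def noise_def by (simp add: norm_minus_commute)
  finally have "(norm (grad_map_md \<omega> k))\<^sup>2 \<le> (2 * L * norm (xag \<omega> k - xmd \<omega> k) + norm (noise \<omega> k))\<^sup>2"
    by (intro power_mono) auto
  also have "\<dots> \<le> 2 * (2 * L * norm (xag \<omega> k - xmd \<omega> k))\<^sup>2 + 2 * (norm (noise \<omega> k))\<^sup>2"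
    by (rule sum_power2_le)
  also have "\<dots> = 8 * L\<^sup>2 * (norm (xag \<omega> k - xmd \<omega> k))\<^sup>2 + 2 * (norm (noise \<omega> k))\<^sup>2"
    by (simp add: power2_eq_square algebra_simps)
  finally show ?thesis .
qed

lemma curvature_term_1: "curvature_term \<omega> 1 = (norm (z - x0))\<^sup>2"
  unfolding curvature_term_def rsag_alpha_1 xmd_1 by simp

lemma curvature_term_le:
  assumes k: "k \<ge> 2"
  shows "curvature_term \<omega> k \<le> 2 * rsag_alpha k * radius_sq"
proof -
  define \<alpha> where "\<alpha> = rsag_alpha k"
  have \<alpha>: "0 < \<alpha>" "\<alpha> \<le> 1" using rsag_alpha_bounds[of k] k unfolding \<alpha>_def by auto
  have "xag \<omega> (k - 1) - xmd \<omega> k = \<alpha> *\<^sub>R (xag \<omega> (k - 1) - xk \<omega> (k - 1))"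
    unfolding xmd_eq \<alpha>_def by (simp add: algebra_simps)
  moreover have "k - 1 \<ge> 1" using k by simp
  then have "norm (xag \<omega> (k - 1) - xk \<omega> (k - 1)) \<le> 2 * M"
    using norm_triangle_ineq4[of "xag \<omega> (k - 1)" "xk \<omega> (k - 1)"] norm_xag_le[of "k - 1" \<omega>]
      norm_xk_le[of "k - 1" \<omega>] by simp
  then have "(norm (xag \<omega> (k - 1) - xk \<omega> (k - 1)))\<^sup>2 \<le> (2 * M)\<^sup>2"
    by (rule power_mono) simp
  ultimately have "(norm (xag \<omega> (k - 1) - xmd \<omega> k))\<^sup>2 \<le> \<alpha>\<^sup>2 * (2 * M)\<^sup>2"
    using \<alpha> by (simp add: power_mult_distrib mult_left_mono)
  then have "(1 - \<alpha>) * (norm (xag \<omega> (k - 1) - xmd \<omega> k))\<^sup>2 \<le> (1 - \<alpha>) * \<alpha> * 4 * (\<alpha> * M\<^sup>2)"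
    using \<alpha> mult_left_mono[of _ _ "1 - \<alpha>"] by (fastforce simp: power2_eq_square algebra_simps)
  also have "\<dots> \<le> 1 * (\<alpha> * M\<^sup>2)"
  proof (rule mult_right_mono)
    have "0 \<le> (2 * \<alpha> - 1)\<^sup>2" by simp
    then show "(1 - \<alpha>) * \<alpha> * 4 \<le> 1" by (simp add: power2_eq_square algebra_simps)
  qed (use \<alpha> in simp)
  finally have first: "(1 - \<alpha>) * (norm (xag \<omega> (k - 1) - xmd \<omega> k))\<^sup>2 \<le> \<alpha> * M\<^sup>2" by simp
  have "norm (z - xmd \<omega> k) \<le> norm z + M"
    using norm_triangle_ineq4[of z "xmd \<omega> k"] norm_xmd_le[OF k, of \<omega>] by simp
  then have "(norm (z - xmd \<omega> k))\<^sup>2 \<le> 2 * (norm z)\<^sup>2 + 2 * M\<^sup>2"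
    using sum_power2_le[of "norm z" M] power_mono[of "norm (z - xmd \<omega> k)" "norm z + M" 2] by simp
  then have "\<alpha> * (norm (z - xmd \<omega> k))\<^sup>2 \<le> \<alpha> * (2 * (norm z)\<^sup>2 + 2 * M\<^sup>2)"
    using \<alpha> by (intro mult_left_mono) auto
  moreover have "0 \<le> \<alpha> * M\<^sup>2" using \<alpha> by simp
  moreover have "2 * \<alpha> * ((norm z)\<^sup>2 + 2 * M\<^sup>2) = \<alpha> * M\<^sup>2 + \<alpha> * (2 * (norm z)\<^sup>2 + 2 * M\<^sup>2) + \<alpha> * M\<^sup>2"
    by (simp add: algebra_simps)
  ultimately show ?thesis
    using first unfolding curvature_term_def radius_sq_def \<alpha>_def[symmetric] by linarith
qed

lemma sum_weighted_curvature_term_le: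
  "(\<Sum>k = 1..N. rsag_weight k * curvature_term \<omega> k) \<le> (norm (z - x0))\<^sup>2 + radius_sq * real N * (real N + 1)"
proof -
  have "rsag_weight k * curvature_term \<omega> k \<le> (if k = 1 then (norm (z - x0))\<^sup>2 else 0) + 2 * radius_sq * real k"
    if k: "k \<in> {1..N}" for k
  proof (cases "k = 1")
    case True
    then show ?thesis using curvature_term_1 by (simp add: rsag_weight_def radius_sq_def)
  next
    case False
    then have "rsag_weight k * curvature_term \<omega> k \<le> rsag_weight k * (2 * rsag_alpha k * radius_sq)"
      using k by (intro mult_left_mono curvature_term_le rsag_weight_nonneg) auto
    also have "\<dots> = 2 * radius_sq * (rsag_weight k * rsag_alpha k)" by (simp add: algebra_simps)
    finally show ?thesis using False unfolding rsag_weight_mult_alpha by simp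
  qed
  then have "(\<Sum>k = 1..N. rsag_weight k * curvature_term \<omega> k)
      \<le> (\<Sum>k = 1..N. (if k = 1 then (norm (z - x0))\<^sup>2 else 0)) + 2 * radius_sq * (\<Sum>k = 1..N. real k)"
    by (subst sum_distrib_left, subst sum.distrib[symmetric]) (rule sum_mono)
  also have "(\<Sum>k = 1..N. (if k = 1 then (norm (z - x0))\<^sup>2 else 0)) \<le> (norm (z - x0))\<^sup>2"
    by (cases "N \<ge> 1") auto
  finally show ?thesis unfolding sum_of_nat_atLeastAtMost by (simp add: field_simps)
qed

definition pathwise_bound :: "nat \<Rightarrow> (nat \<times> nat \<Rightarrow> 'b) \<Rightarrow> real" where
  "pathwise_bound N \<omega> = 128 / 3 * L\<^sup>2 * (norm (z - x0))\<^sup>2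
     + 32 / 3 * L * Lf * ((norm (z - x0))\<^sup>2 + radius_sq * real N * (real N + 1))
     + 134 / 3 * (\<Sum>k = 1..N. rsag_weight k * (norm (noise \<omega> k))\<^sup>2)
     + 64 * L / 3 * (\<Sum>k = 1..N. real k * inner (noise \<omega> k) (z - xk \<omega> (k - 1)))"

lemma sum_weighted_displacement_le:
  "3 * L / 8 * (\<Sum>k = 1..N. rsag_weight k * (norm (xag \<omega> k - xmd \<omega> k))\<^sup>2)
   \<le> 2 * L * (norm (z - x0))\<^sup>2 + Lf / 2 * (\<Sum>k = 1..N. rsag_weight k * curvature_term \<omega> k)
     + 2 / L * (\<Sum>k = 1..N. rsag_weight k * (norm (noise \<omega> k))\<^sup>2)
     + (\<Sum>k = 1..N. real k * inner (noise \<omega> k) (z - xk \<omega> (k - 1)))"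
proof -
  have "rsag_weight N * gap \<omega> N \<ge> 0"
    using gap_nonneg[of N \<omega>] rsag_weight_nonneg[of N] by (cases "N = 0") (auto simp: rsag_weight_def)
  moreover have "2 * L * (norm (z - xk \<omega> N))\<^sup>2 \<ge> 0" using L_pos by simp
  moreover have "(\<Sum>k = 1..N. rsag_weight k * (3 * L / 8 * (norm (xag \<omega> k - xmd \<omega> k))\<^sup>2))
      = 3 * L / 8 * (\<Sum>k = 1..N. rsag_weight k * (norm (xag \<omega> k - xmd \<omega> k))\<^sup>2)"
    by (simp add: sum_distrib_left algebra_simps)
  moreover have "rsag_weight k * step_error \<omega> k = Lf / 2 * (rsag_weight k * curvature_term \<omega> k)
      + 2 / L * (rsag_weight k * (norm (noise \<omega> k))\<^sup>2) + real k * inner (noise \<omega> k) (z - xk \<omega> (k - 1))" for k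
    unfolding step_error_def rsag_weight_mult_alpha[of k, symmetric] by (simp add: algebra_simps)
  then have "(\<Sum>k = 1..N. rsag_weight k * step_error \<omega> k)
      = Lf / 2 * (\<Sum>k = 1..N. rsag_weight k * curvature_term \<omega> k)
        + 2 / L * (\<Sum>k = 1..N. rsag_weight k * (norm (noise \<omega> k))\<^sup>2)
        + (\<Sum>k = 1..N. real k * inner (noise \<omega> k) (z - xk \<omega> (k - 1)))"
    by (simp add: sum.distrib sum_distrib_left)
  ultimately show ?thesis using telescoped_recursion[of N \<omega>] by linarith
qed

lemma sum_weighted_grad_map_md_le_pathwise_bound:
  "(\<Sum>k = 1..N. rsag_weight k * (norm (grad_map_md \<omega> k))\<^sup>2) \<le> pathwise_bound N \<omega>"
proof -
  let ?D = "\<Sum>k = 1..N. rsag_weight k * (norm (xag \<omega> k - xmd \<omega> k))\<^sup>2"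
  let ?E = "\<Sum>k = 1..N. rsag_weight k * (norm (noise \<omega> k))\<^sup>2"
  let ?V = "\<Sum>k = 1..N. real k * inner (noise \<omega> k) (z - xk \<omega> (k - 1))"
  have "Lf / 2 * (\<Sum>k = 1..N. rsag_weight k * curvature_term \<omega> k)
      \<le> Lf / 2 * ((norm (z - x0))\<^sup>2 + radius_sq * real N * (real N + 1))"
    using sum_weighted_curvature_term_le Lf_nonneg by (intro mult_left_mono) auto
  then have D: "3 * L / 8 * ?D \<le> 2 * L * (norm (z - x0))\<^sup>2
      + Lf / 2 * ((norm (z - x0))\<^sup>2 + radius_sq * real N * (real N + 1)) + 2 / L * ?E + ?V"
    using sum_weighted_displacement_le[where N = N and \<omega> = \<omega>] by linarith
  have "(\<Sum>k = 1..N. rsag_weight k * (norm (grad_map_md \<omega> k))\<^sup>2)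
      \<le> (\<Sum>k = 1..N. rsag_weight k * (8 * L\<^sup>2 * (norm (xag \<omega> k - xmd \<omega> k))\<^sup>2 + 2 * (norm (noise \<omega> k))\<^sup>2))"
    by (rule sum_mono) (auto intro!: mult_left_mono norm_grad_map_md_le rsag_weight_nonneg)
  also have "\<dots> = 8 * L\<^sup>2 * ?D + 2 * ?E"
    by (simp add: distrib_left sum.distrib sum_distrib_left mult.assoc mult.left_commute)
  also have "\<dots> = 64 * L / 3 * (3 * L / 8 * ?D) + 2 * ?E"
    by (simp add: power2_eq_square field_simps)
  also have "\<dots> \<le> 64 * L / 3 * (2 * L * (norm (z - x0))\<^sup>2
      + Lf / 2 * ((norm (z - x0))\<^sup>2 + radius_sq * real N * (real N + 1)) + 2 / L * ?E + ?V) + 2 * ?E"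
    using D L_pos by (intro add_right_mono mult_left_mono) auto
  also have "\<dots> = pathwise_bound N \<omega>"
    unfolding pathwise_bound_def using L_pos by (simp add: field_simps power2_eq_square)
  finally show ?thesis .
qed

end

section \<open>Mini-batch errors of an i.i.d. oracle\<close>

locale iid_oracle =
  fixes \<Xi> :: "'b measure" and G :: "'a::euclidean_space \<Rightarrow> 'b \<Rightarrow> 'a" and g :: "'a \<Rightarrow> 'a" and \<sigma> :: real
  assumes prob_space_\<Xi>: "prob_space \<Xi>"
    and G_measurable: "(\<lambda>(x, \<xi>). G x \<xi>) \<in> borel_measurable (borel \<Otimes>\<^sub>M \<Xi>)"
    and G_integrable: "\<And>x. integrable \<Xi> (G x)"
    and G_unbiased: "\<And>x. (\<integral>\<xi>. G x \<xi> \<partial>\<Xi>) = g x"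
    and G_variance: "\<And>x. (\<integral>\<^sup>+\<xi>. ennreal ((norm (G x \<xi> - g x))\<^sup>2) \<partial>\<Xi>) \<le> ennreal (\<sigma>\<^sup>2)"
    and g_measurable: "g \<in> borel_measurable borel"
begin

definition paths :: "(nat \<times> nat \<Rightarrow> 'b) measure" where
  "paths = (\<Pi>\<^sub>M i\<in>UNIV. \<Xi>)"

definition paths_without :: "nat \<times> nat \<Rightarrow> (nat \<times> nat \<Rightarrow> 'b) measure" where
  "paths_without c = (\<Pi>\<^sub>M i\<in>UNIV - {c}. \<Xi>)"

lemma prob_space_paths: "prob_space paths"
  unfolding paths_def by (rule prob_space_PiM) (use prob_space_\<Xi> in auto)

lemma prob_space_paths_without: "prob_space (paths_without c)"
  unfolding paths_without_def by (rule prob_space_PiM) (use prob_space_\<Xi> in auto)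

lemma measurable_fun_upd_paths: "(\<lambda>(x, w). w(c := x)) \<in> measurable (\<Xi> \<Otimes>\<^sub>M paths_without c) paths"
proof -
  have "(\<lambda>p. (snd p)(c := fst p)) \<in> measurable (\<Xi> \<Otimes>\<^sub>M paths_without c) (\<Pi>\<^sub>M i\<in>UNIV. \<Xi>)"
    by (rule measurable_fun_upd[where J = "UNIV - {c}"]) (auto simp: paths_without_def)
  then show ?thesis unfolding paths_def by (simp add: case_prod_beta)
qed

lemma paths_eq_distr_fun_upd: "paths = distr (\<Xi> \<Otimes>\<^sub>M paths_without c) paths (\<lambda>(x, w). w(c := x))"
proof -
  have "distr (\<Xi> \<Otimes>\<^sub>M (\<Pi>\<^sub>M i\<in>UNIV - {c}. \<Xi>)) (\<Pi>\<^sub>M i\<in>insert c (UNIV - {c}). \<Xi>) (\<lambda>(x, X). X(c := x))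
      = (\<Pi>\<^sub>M i\<in>insert c (UNIV - {c}). \<Xi>)"
    by (rule distr_pair_PiM_eq_PiM) (use prob_space_\<Xi> in auto)
  then show ?thesis unfolding paths_def paths_without_def by simp
qed

lemma nn_integral_paths_split:
  assumes F: "F \<in> borel_measurable paths"
  shows "(\<integral>\<^sup>+w. F w \<partial>paths) = (\<integral>\<^sup>+w. (\<integral>\<^sup>+x. F (w(c := x)) \<partial>\<Xi>) \<partial>paths_without c)"
proof -
  interpret \<Xi>: prob_space \<Xi> by (rule prob_space_\<Xi>)
  interpret P: prob_space "paths_without c" by (rule prob_space_paths_without)
  interpret pair_sigma_finite \<Xi> "paths_without c" ..
  have "(\<integral>\<^sup>+w. F w \<partial>paths) = (\<integral>\<^sup>+p. F ((\<lambda>(x, w). w(c := x)) p) \<partial>(\<Xi> \<Otimes>\<^sub>M paths_without c))"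
    by (subst paths_eq_distr_fun_upd[of c], rule nn_integral_distr[OF measurable_fun_upd_paths])
       (use F in simp)
  also have "\<dots> = (\<integral>\<^sup>+w. (\<integral>\<^sup>+x. F (w(c := x)) \<partial>\<Xi>) \<partial>paths_without c)"
    by (subst nn_integral_snd[symmetric])
       (auto intro: measurable_comp[OF measurable_fun_upd_paths F, unfolded comp_def])
  finally show ?thesis .
qed

lemma integral_paths_split:
  fixes F :: "(nat \<times> nat \<Rightarrow> 'b) \<Rightarrow> real"
  assumes F: "integrable paths F"
  shows "(\<integral>w. F w \<partial>paths) = (\<integral>w. (\<integral>x. F (w(c := x)) \<partial>\<Xi>) \<partial>paths_without c)"
proof -
  interpret \<Xi>: prob_space \<Xi> by (rule prob_space_\<Xi>)
  interpret P: prob_space "paths_without c" by (rule prob_space_paths_without)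
  interpret pair_sigma_finite \<Xi> "paths_without c" ..
  have Fm: "F \<in> borel_measurable paths" using F by auto
  have "integrable (distr (\<Xi> \<Otimes>\<^sub>M paths_without c) paths (\<lambda>(x, w). w(c := x))) F"
    using F by (subst paths_eq_distr_fun_upd[of c, symmetric])
  then have "integrable (\<Xi> \<Otimes>\<^sub>M paths_without c) (\<lambda>(x, w). F (w(c := x)))"
    by (subst (asm) integrable_distr_eq[OF measurable_fun_upd_paths Fm]) (simp add: case_prod_unfold)
  note integral_snd[OF this]
  moreover have "(\<integral>w. F w \<partial>paths) = (\<integral>p. F ((\<lambda>(x, w). w(c := x)) p) \<partial>(\<Xi> \<Otimes>\<^sub>M paths_without c))"
    by (subst paths_eq_distr_fun_upd[of c], rule integral_distr[OF measurable_fun_upd_paths Fm])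
  ultimately show ?thesis by (simp add: case_prod_unfold)
qed

lemma measurable_oracle:
  assumes "Y \<in> borel_measurable paths"
  shows "(\<lambda>w. G (Y w) (w c)) \<in> borel_measurable paths"
proof -
  have "(\<lambda>w. w c) \<in> measurable paths \<Xi>"
    unfolding paths_def by (rule measurable_component_singleton) simp
  with assms have "(\<lambda>w. (Y w, w c)) \<in> measurable paths (borel \<Otimes>\<^sub>M \<Xi>)"
    by (rule measurable_Pair)
  from measurable_comp[OF this G_measurable] show ?thesis by (simp add: comp_def)
qed

definition oracle_error :: "((nat \<times> nat \<Rightarrow> 'b) \<Rightarrow> 'a) \<Rightarrow> nat \<times> nat \<Rightarrow> (nat \<times> nat \<Rightarrow> 'b) \<Rightarrow> 'a" where
  "oracle_error Y c w = G (Y w) (w c) - g (Y w)"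

lemma borel_measurable_oracle_error:
  assumes "Y \<in> borel_measurable paths"
  shows "oracle_error Y c \<in> borel_measurable paths"
  unfolding oracle_error_def
  using measurable_oracle[OF assms] measurable_comp[OF assms g_measurable]
  by (auto simp: comp_def)

lemma oracle_error_fun_upd:
  assumes "\<And>w t. Y (w(c := t)) = Y w" and "c' \<noteq> c"
  shows "oracle_error Y c' (w(c := t)) = oracle_error Y c' w"
  unfolding oracle_error_def using assms by simp

text \<open>In the lemmas below, the query point \<open>Y\<close> does not depend on the sample \<open>w c\<close> that is used at it.\<close>

lemma nn_integral_oracle_error_sq_le:
  assumes Y: "Y \<in> borel_measurable paths" and indep: "\<And>w t. Y (w(c := t)) = Y w"
  shows "(\<integral>\<^sup>+w. ennreal ((norm (oracle_error Y c w))\<^sup>2) \<partial>paths) \<le> ennreal (\<sigma>\<^sup>2)"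
proof -
  interpret P: prob_space "paths_without c" by (rule prob_space_paths_without)
  have "(\<integral>\<^sup>+w. ennreal ((norm (oracle_error Y c w))\<^sup>2) \<partial>paths)
      = (\<integral>\<^sup>+w. (\<integral>\<^sup>+x. ennreal ((norm (G (Y w) x - g (Y w)))\<^sup>2) \<partial>\<Xi>) \<partial>paths_without c)"
  proof (subst nn_integral_paths_split[where c = c])
    show "(\<lambda>w. ennreal ((norm (oracle_error Y c w))\<^sup>2)) \<in> borel_measurable paths"
      using borel_measurable_oracle_error[OF Y] by measurable
  qed (simp add: oracle_error_def indep)
  also have "\<dots> \<le> (\<integral>\<^sup>+w. ennreal (\<sigma>\<^sup>2) \<partial>paths_without c)"
    by (rule nn_integral_mono) (rule G_variance)
  finally show ?thesis by (simp add: P.emeasure_space_1)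
qed

lemma integrable_oracle_error_sq:
  assumes Y: "Y \<in> borel_measurable paths" and indep: "\<And>w t. Y (w(c := t)) = Y w"
  shows "integrable paths (\<lambda>w. (norm (oracle_error Y c w))\<^sup>2)"
  unfolding integrable_iff_bounded
  using borel_measurable_oracle_error[OF Y, of c] nn_integral_oracle_error_sq_le[OF Y indep]
  by (auto simp: ennreal_less_top le_less_trans)

lemma integral_oracle_error_sq_le:
  assumes Y: "Y \<in> borel_measurable paths" and indep: "\<And>w t. Y (w(c := t)) = Y w"
  shows "(\<integral>w. (norm (oracle_error Y c w))\<^sup>2 \<partial>paths) \<le> \<sigma>\<^sup>2"
proof -
  have "ennreal (\<integral>w. (norm (oracle_error Y c w))\<^sup>2 \<partial>paths)
      = (\<integral>\<^sup>+w. ennreal ((norm (oracle_error Y c w))\<^sup>2) \<partial>paths)"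
    by (rule nn_integral_eq_integral[OF integrable_oracle_error_sq[OF Y indep], symmetric]) auto
  with nn_integral_oracle_error_sq_le[OF Y indep]
  have "ennreal (\<integral>w. (norm (oracle_error Y c w))\<^sup>2 \<partial>paths) \<le> ennreal (\<sigma>\<^sup>2)" by simp
  then show ?thesis by (subst (asm) ennreal_le_iff) auto
qed

lemma
  assumes Y: "Y \<in> borel_measurable paths" and indep: "\<And>w t. Y (w(c := t)) = Y w"
    and V: "V \<in> borel_measurable paths" and indepV: "\<And>w t. V (w(c := t)) = V w"
    and V_sq: "integrable paths (\<lambda>w. (norm (V w))\<^sup>2)"
  shows integrable_inner_oracle_error: "integrable paths (\<lambda>w. inner (oracle_error Y c w) (V w))"
    and integral_inner_oracle_error_eq_0: "(\<integral>w. inner (oracle_error Y c w) (V w) \<partial>paths) = 0"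
proof -
  interpret \<Xi>: prob_space \<Xi> by (rule prob_space_\<Xi>)
  show int: "integrable paths (\<lambda>w. inner (oracle_error Y c w) (V w))"
  proof (rule Bochner_Integration.integrable_bound)
    show "integrable paths (\<lambda>w. (norm (oracle_error Y c w))\<^sup>2 + (norm (V w))\<^sup>2)"
      using integrable_oracle_error_sq[OF Y indep] V_sq by auto
    show "(\<lambda>w. inner (oracle_error Y c w) (V w)) \<in> borel_measurable paths"
      using borel_measurable_oracle_error[OF Y] V by measurable
    show "AE w in paths. norm (inner (oracle_error Y c w) (V w))
        \<le> norm ((norm (oracle_error Y c w))\<^sup>2 + (norm (V w))\<^sup>2)"
      by (intro AE_I2) (simp add: abs_inner_le_sum_power2)
  qed
  have zero: "(\<integral>x. inner (oracle_error Y c (w(c := x))) (V (w(c := x))) \<partial>\<Xi>) = 0" for w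
  proof -
    have "(\<integral>x. inner (oracle_error Y c (w(c := x))) (V (w(c := x))) \<partial>\<Xi>)
        = (\<integral>x. inner (G (Y w) x - g (Y w)) (V w) \<partial>\<Xi>)"
      unfolding oracle_error_def indep indepV by simp
    also have "\<dots> = inner (\<integral>x. G (Y w) x - g (Y w) \<partial>\<Xi>) (V w)"
      by (rule integral_inner_left) (use G_integrable in auto)
    also have "(\<integral>x. G (Y w) x - g (Y w) \<partial>\<Xi>) = g (Y w) - g (Y w)"
      using G_integrable G_unbiased by (simp add: \<Xi>.prob_space)
    finally show ?thesis by (simp add: fun_upd_def)
  qed
  have "(\<integral>w. inner (oracle_error Y c w) (V w) \<partial>paths)
      = (\<integral>w. (\<integral>x. inner (oracle_error Y c (w(c := x))) (V (w(c := x))) \<partial>\<Xi>) \<partial>paths_without c)"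
    by (rule integral_paths_split[OF int])
  then show "(\<integral>w. inner (oracle_error Y c w) (V w) \<partial>paths) = 0"
    unfolding zero by simp
qed

definition batch_error :: "((nat \<times> nat \<Rightarrow> 'b) \<Rightarrow> 'a) \<Rightarrow> nat \<Rightarrow> nat \<Rightarrow> (nat \<times> nat \<Rightarrow> 'b) \<Rightarrow> 'a" where
  "batch_error Y k m w = (1 / real m) *\<^sub>R (\<Sum>i = 1..m. oracle_error Y (k, i) w)"

lemma
  assumes Y: "Y \<in> borel_measurable paths" and indep: "\<And>i w t. Y (w((k, i) := t)) = Y w"
  shows integrable_inner_oracle_errors:
      "integrable paths (\<lambda>w. inner (oracle_error Y (k, i) w) (oracle_error Y (k, j) w))"
    and integral_inner_oracle_errors_le:
      "(\<integral>w. inner (oracle_error Y (k, i) w) (oracle_error Y (k, j) w) \<partial>paths) \<le> (if i = j then \<sigma>\<^sup>2 else 0)"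
proof -
  have "integrable paths (\<lambda>w. inner (oracle_error Y (k, i) w) (oracle_error Y (k, j) w)) \<and>
    (\<integral>w. inner (oracle_error Y (k, i) w) (oracle_error Y (k, j) w) \<partial>paths) \<le> (if i = j then \<sigma>\<^sup>2 else 0)"
  proof (cases "i = j")
    case True
    then show ?thesis
      using integrable_oracle_error_sq[OF Y indep] integral_oracle_error_sq_le[OF Y indep]
      by (simp add: power2_norm_eq_inner)
  next
    case False
    then show ?thesis
      using integrable_inner_oracle_error[OF Y indep borel_measurable_oracle_error[OF Y] oracle_error_fun_upd[OF indep]
          integrable_oracle_error_sq[OF Y indep]]
        integral_inner_oracle_error_eq_0[OF Y indep borel_measurable_oracle_error[OF Y] oracle_error_fun_upd[OF indep]
          integrable_oracle_error_sq[OF Y indep]]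
      by auto
  qed
  then show "integrable paths (\<lambda>w. inner (oracle_error Y (k, i) w) (oracle_error Y (k, j) w))"
    and "(\<integral>w. inner (oracle_error Y (k, i) w) (oracle_error Y (k, j) w) \<partial>paths) \<le> (if i = j then \<sigma>\<^sup>2 else 0)"
    by auto
qed

lemma
  assumes Y: "Y \<in> borel_measurable paths" and indep: "\<And>i w t. Y (w((k, i) := t)) = Y w" and m: "m \<ge> 1"
  shows integrable_batch_error_sq: "integrable paths (\<lambda>w. (norm (batch_error Y k m w))\<^sup>2)"
    and integral_batch_error_sq_le: "(\<integral>w. (norm (batch_error Y k m w))\<^sup>2 \<partial>paths) \<le> \<sigma>\<^sup>2 / real m"
proof -
  have sq: "(norm (batch_error Y k m w))\<^sup>2
      = (1 / real m)\<^sup>2 * (\<Sum>i = 1..m. \<Sum>j = 1..m. inner (oracle_error Y (k, i) w) (oracle_error Y (k, j) w))" for w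
    unfolding batch_error_def power2_norm_eq_inner inner_scaleR_left inner_scaleR_right inner_sum_left
    by (simp add: inner_sum_right power2_eq_square)
  show "integrable paths (\<lambda>w. (norm (batch_error Y k m w))\<^sup>2)"
    unfolding sq using integrable_inner_oracle_errors[OF Y indep] by auto
  have "(\<integral>w. (norm (batch_error Y k m w))\<^sup>2 \<partial>paths)
      = (1 / real m)\<^sup>2 * (\<Sum>i = 1..m. \<Sum>j = 1..m. (\<integral>w. inner (oracle_error Y (k, i) w) (oracle_error Y (k, j) w) \<partial>paths))"
    unfolding sq using integrable_inner_oracle_errors[OF Y indep]
    by (simp add: Bochner_Integration.integral_sum Bochner_Integration.integrable_sum)
  also have "\<dots> \<le> (1 / real m)\<^sup>2 * (\<Sum>i = 1..m. \<Sum>j = 1..m. (if i = j then \<sigma>\<^sup>2 else 0))"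
    by (intro mult_left_mono sum_mono integral_inner_oracle_errors_le[OF Y indep]) auto
  also have "\<dots> = \<sigma>\<^sup>2 / real m" using m by (simp add: power2_eq_square field_simps)
  finally show "(\<integral>w. (norm (batch_error Y k m w))\<^sup>2 \<partial>paths) \<le> \<sigma>\<^sup>2 / real m" .
qed

lemma
  assumes Y: "Y \<in> borel_measurable paths" and indep: "\<And>i w t. Y (w((k, i) := t)) = Y w"
    and V: "V \<in> borel_measurable paths" and indepV: "\<And>i w t. V (w((k, i) := t)) = V w"
    and V_sq: "integrable paths (\<lambda>w. (norm (V w))\<^sup>2)"
  shows integrable_inner_batch_error: "integrable paths (\<lambda>w. inner (batch_error Y k m w) (V w))"
    and integral_inner_batch_error_eq_0: "(\<integral>w. inner (batch_error Y k m w) (V w) \<partial>paths) = 0"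
proof -
  have eq: "inner (batch_error Y k m w) (V w) = (1 / real m) * (\<Sum>i = 1..m. inner (oracle_error Y (k, i) w) (V w))" for w
    unfolding batch_error_def by (simp add: inner_sum_left)
  show "integrable paths (\<lambda>w. inner (batch_error Y k m w) (V w))"
    unfolding eq using integrable_inner_oracle_error[OF Y indep V indepV V_sq] by auto
  show "(\<integral>w. inner (batch_error Y k m w) (V w) \<partial>paths) = 0"
    unfolding eq using integrable_inner_oracle_error[OF Y indep V indepV V_sq]
      integral_inner_oracle_error_eq_0[OF Y indep V indepV V_sq]
    by (simp add: Bochner_Integration.integral_sum)
qed

end

section \<open>Expected squared gradient mapping\<close>

lemma
  fixes n :: real
  assumes n: "n \<ge> 1"
  shows inverse_tetrahedral_le: "1 / (n * (n + 1) * (n + 2) / 6) \<le> 6 / n ^ 3"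
    and tetrahedral_ratio_le: "n * (n + 1) / (n * (n + 1) * (n + 2) / 6) \<le> 6 / n"
    and tetrahedral_ratio_shift_le: "n * (n + 3) / (n * (n + 1) * (n + 2) / 6) \<le> 6 / n"
proof -
  have "n ^ 3 \<le> n * (n + 1) * (n + 2)" using n by (simp add: power3_eq_cube mult_mono)
  then show "1 / (n * (n + 1) * (n + 2) / 6) \<le> 6 / n ^ 3"
    using n by (simp add: frac_le)
  have "n * (n + 1) / (n * (n + 1) * (n + 2) / 6) = 6 / (n + 2)"
    using n by (simp add: divide_simps)
  then show "n * (n + 1) / (n * (n + 1) * (n + 2) / 6) \<le> 6 / n"
    using n by (simp add: frac_le)
  have "6 * (n + 3) * n \<le> 6 * ((n + 1) * (n + 2))" by (simp add: algebra_simps)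
  then show "n * (n + 3) / (n * (n + 1) * (n + 2) / 6) \<le> 6 / n"
    using n by (simp add: divide_simps mult.commute mult.left_commute)
qed

lemma rsag_rate_arith:
  fixes n L Lf B r0 D :: real
  assumes n: "n \<ge> 1" and L: "L > 0" and Lf: "0 \<le> Lf" "Lf \<le> L" and B: "B \<ge> 0" and r0: "r0 \<ge> 0"
  shows "(128 / 3 * L\<^sup>2 * r0 + 32 / 3 * L * Lf * (r0 + B * n * (n + 1)) + 134 / 3 * (L * D\<^sup>2 * n * (n + 3) / 4))
           / (n * (n + 1) * (n + 2) / 6)
         \<le> 96 * L * (4 * L * r0 / n ^ 3 + (Lf * B + 3 * D\<^sup>2) / n)"
proof -
  define S where "S = n * (n + 1) * (n + 2) / 6"
  have S: "S > 0" unfolding S_def using n by simp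
  define c1 where "c1 = (128 / 3 * L\<^sup>2 + 32 / 3 * L * Lf) * r0"
  define c2 where "c2 = 32 / 3 * L * Lf * B"
  define c3 where "c3 = 67 / 6 * L * D\<^sup>2"
  have "(128 / 3 * L\<^sup>2 * r0 + 32 / 3 * L * Lf * (r0 + B * n * (n + 1)) + 134 / 3 * (L * D\<^sup>2 * n * (n + 3) / 4)) / S
      = c1 * (1 / S) + c2 * (n * (n + 1) / S) + c3 * (n * (n + 3) / S)"
    unfolding c1_def c2_def c3_def using S by (simp add: field_simps)
  also have "\<dots> \<le> c1 * (6 / n ^ 3) + c2 * (6 / n) + c3 * (6 / n)"
    unfolding S_def using L Lf B r0 n inverse_tetrahedral_le tetrahedral_ratio_le tetrahedral_ratio_shift_le
    by (intro add_mono mult_left_mono) (auto simp: c1_def c2_def c3_def)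
  also have "\<dots> \<le> 96 * L * (4 * L * r0 / n ^ 3) + 96 * L * (Lf * B / n) + 96 * L * (3 * D\<^sup>2 / n)"
  proof (intro add_mono)
    have "c1 * 6 = 256 * (L * (L * r0)) + 64 * (L * (Lf * r0))"
      unfolding c1_def by (simp add: power2_eq_square algebra_simps)
    moreover have "L * (Lf * r0) \<le> L * (L * r0)" using L Lf r0 by (intro mult_left_mono mult_right_mono) auto
    moreover have "0 \<le> L * (L * r0)" using L r0 by simp
    moreover have "96 * L * (4 * L * r0) = 384 * (L * (L * r0))" by simp
    ultimately have "c1 * 6 \<le> 96 * L * (4 * L * r0)" by linarith
    then show "c1 * (6 / n ^ 3) \<le> 96 * L * (4 * L * r0 / n ^ 3)"
      using n divide_right_mono[of "c1 * 6" _ "n ^ 3"] by simp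
    have "c2 * 6 \<le> 96 * L * (Lf * B)" unfolding c2_def using L Lf B by (simp add: mult_nonneg_nonneg)
    then show "c2 * (6 / n) \<le> 96 * L * (Lf * B / n)"
      using n divide_right_mono[of "c2 * 6" _ n] by simp
    have "c3 * 6 \<le> 96 * L * (3 * D\<^sup>2)" unfolding c3_def using L by simp
    then show "c3 * (6 / n) \<le> 96 * L * (3 * D\<^sup>2 / n)"
      using n divide_right_mono[of "c3 * 6" _ n] by simp
  qed
  also have "\<dots> = 96 * L * (4 * L * r0 / n ^ 3 + (Lf * B + 3 * D\<^sup>2) / n)"
    by (simp add: algebra_simps add_divide_distrib)
  finally show ?thesis unfolding S_def .
qed

lemma nn_integral_measure_pmf_pair:
  fixes p :: "'i::countable pmf" and F :: "'i \<Rightarrow> 'w \<Rightarrow> ennreal"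
  assumes P: "prob_space P" and F: "\<And>k. F k \<in> borel_measurable P"
    and A: "finite A" "set_pmf p \<subseteq> A"
  shows "(\<integral>\<^sup>+(k, w). F k w \<partial>(measure_pmf p \<Otimes>\<^sub>M P)) = (\<Sum>k\<in>A. (\<integral>\<^sup>+w. F k w \<partial>P) * pmf p k)"
proof -
  interpret P: prob_space P by (rule P)
  have "(\<lambda>(k, w). F k w) \<in> borel_measurable (count_space UNIV \<Otimes>\<^sub>M P)"
    by (rule measurable_pair_measure_countable1) (simp_all add: F)
  moreover have "sets (measure_pmf p \<Otimes>\<^sub>M P) = sets (count_space UNIV \<Otimes>\<^sub>M P)"
    by (rule sets_pair_measure_cong) simp_all
  ultimately have m: "(\<lambda>(k, w). F k w) \<in> borel_measurable (measure_pmf p \<Otimes>\<^sub>M P)"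
    using measurable_cong_sets by blast
  have "(\<integral>\<^sup>+(k, w). F k w \<partial>(measure_pmf p \<Otimes>\<^sub>M P)) = (\<integral>\<^sup>+k. (\<integral>\<^sup>+w. F k w \<partial>P) \<partial>measure_pmf p)"
    using P.nn_integral_fst[OF m] by simp
  also have "\<dots> = (\<Sum>k\<in>A. (\<integral>\<^sup>+w. F k w \<partial>P) * pmf p k)"
    by (rule nn_integral_measure_pmf_support) (use A in auto)
  finally show ?thesis .
qed

locale rsag_stochastic = rsag_trajectory X f h gf gh Lf Lh M G \<sigma> Dt x0 z
  + iid_oracle \<Xi> G "\<lambda>x. gf x + gh x" \<sigma>
  for X :: "'a::euclidean_space \<Rightarrow> ereal" and f h gf gh Lf Lh M and G :: "'a \<Rightarrow> 'b \<Rightarrow> 'a"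
    and \<sigma> Dt x0 z and \<Xi> :: "'b measure" +
  assumes \<sigma>_pos: "\<sigma> > 0" and Dt_pos: "Dt > 0"
begin

lemma batch_ge: "real (batch k) \<ge> \<sigma>\<^sup>2 * real k / (L * Dt\<^sup>2)"
proof -
  have "0 \<le> \<sigma>\<^sup>2 * real k / (L * Dt\<^sup>2)" using L_pos by simp
  then have "real (nat \<lceil>\<sigma>\<^sup>2 * real k / (L * Dt\<^sup>2)\<rceil>) = of_int \<lceil>\<sigma>\<^sup>2 * real k / (L * Dt\<^sup>2)\<rceil>"
    by simp
  then show ?thesis unfolding batch_def rsag_batch_def by (simp add: le_of_int_ceiling)
qed

lemma batch_pos: "k \<ge> 1 \<Longrightarrow> batch k \<ge> 1"
proof -
  assume k: "k \<ge> 1"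
  have "0 < \<sigma>\<^sup>2 * real k / (L * Dt\<^sup>2)" using k \<sigma>_pos Dt_pos L_pos by simp
  then show ?thesis using batch_ge[of k] by linarith
qed

lemma borel_measurable_iterates:
  "(\<lambda>w. xk w n) \<in> borel_measurable paths \<and> (\<lambda>w. xag w n) \<in> borel_measurable paths"
proof (induction n)
  case 0
  then show ?case by (simp add: xk_0 xag_0)
next
  case (Suc n)
  have xmd: "(\<lambda>w. xmd w (Suc n)) \<in> borel_measurable paths"
    unfolding xmd_eq using Suc by (intro borel_measurable_add borel_measurable_scaleR borel_measurable_const) auto
  have "(\<lambda>w. Gbar w (Suc n)) \<in> borel_measurable paths"
    unfolding Gbar_def using measurable_oracle[OF xmd] by measurable
  then show ?case
    unfolding xk_Suc xag_Suc using Suc xmd L_pos rsag_lambda_pos[OF L_pos, of "Suc n"]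
    by (auto intro!: borel_measurable_prox_map)
qed

lemma borel_measurable_xmd: "(\<lambda>w. xmd w k) \<in> borel_measurable paths"
  unfolding xmd_eq using borel_measurable_iterates[of "k - 1"]
  by (intro borel_measurable_add borel_measurable_scaleR borel_measurable_const) auto

lemma borel_measurable_grad_map_md: "(\<lambda>w. grad_map_md w k) \<in> borel_measurable paths"
proof -
  have "(\<lambda>w. grad_Psi (xmd w k)) \<in> borel_measurable paths"
    by (rule borel_measurable_continuous_on[OF continuous_on_grad_Psi borel_measurable_xmd])
  then show ?thesis
    unfolding grad_map_md_def grad_map_def using borel_measurable_xmd L_pos
    by (intro borel_measurable_scaleR borel_measurable_diff borel_measurable_const borel_measurable_prox_map) auto
qed

lemma iterates_depend_on_past:
  "(\<And>j i. j \<le> n \<Longrightarrow> w (j, i) = w' (j, i)) \<Longrightarrow> xk w n = xk w' n \<and> xag w n = xag w' n"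
proof (induction n)
  case 0
  then show ?case by (simp add: xk_0 xag_0)
next
  case (Suc n)
  then have "xk w n = xk w' n \<and> xag w n = xag w' n" by auto
  moreover from this have "xmd w (Suc n) = xmd w' (Suc n)" unfolding xmd_eq by simp
  moreover from this have "Gbar w (Suc n) = Gbar w' (Suc n)" unfolding Gbar_def using Suc.prems by simp
  ultimately show ?case unfolding xk_Suc xag_Suc by simp
qed

lemma
  assumes "k \<ge> 1"
  shows xmd_fun_upd: "xmd (w((k, i) := t)) k = xmd w k"
    and xk_fun_upd: "xk (w((k, i) := t)) (k - 1) = xk w (k - 1)"
proof -
  have "xk (w((k, i) := t)) (k - 1) = xk w (k - 1) \<and> xag (w((k, i) := t)) (k - 1) = xag w (k - 1)"
    by (rule iterates_depend_on_past) (use assms in auto)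
  then show "xmd (w((k, i) := t)) k = xmd w k" and "xk (w((k, i) := t)) (k - 1) = xk w (k - 1)"
    unfolding xmd_eq by simp_all
qed

lemma noise_eq_batch_error: "k \<ge> 1 \<Longrightarrow> noise w k = batch_error (\<lambda>w. xmd w k) k (batch k) w"
  using batch_pos[of k]
  unfolding noise_def Gbar_def batch_error_def oracle_error_def grad_Psi_def
  by (simp add: sum_subtractf scaleR_diff_right sum_constant_scaleR)

lemma
  assumes "k \<ge> 1"
  shows integrable_noise_sq: "integrable paths (\<lambda>w. (norm (noise w k))\<^sup>2)"
    and integral_noise_sq_le: "(\<integral>w. (norm (noise w k))\<^sup>2 \<partial>paths) \<le> \<sigma>\<^sup>2 / real (batch k)"
  unfolding noise_eq_batch_error[OF assms]
  by (rule integrable_batch_error_sq integral_batch_error_sq_le;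
      use borel_measurable_xmd xmd_fun_upd[OF assms] batch_pos[OF assms] in simp)+

lemma
  assumes k: "k \<ge> 1"
  shows integrable_inner_noise: "integrable paths (\<lambda>w. inner (noise w k) (z - xk w (k - 1)))"
    and integral_inner_noise_eq_0: "(\<integral>w. inner (noise w k) (z - xk w (k - 1)) \<partial>paths) = 0"
proof -
  interpret P: prob_space paths by (rule prob_space_paths)
  have V: "(\<lambda>w. z - xk w (k - 1)) \<in> borel_measurable paths"
    using borel_measurable_iterates[of "k - 1"] by (intro borel_measurable_diff borel_measurable_const) auto
  have "norm (z - xk w (k - 1)) \<le> norm z + (norm x0 + M)" for w
    using norm_triangle_ineq4[of z "xk w (k - 1)"] norm_xk_le_initial[of w "k - 1"] by simp
  then have "integrable paths (\<lambda>w. (norm (z - xk w (k - 1)))\<^sup>2)"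
    using V by (intro P.integrable_const_bound[where B = "(norm z + (norm x0 + M))\<^sup>2"])
      (auto intro!: power_mono)
  note * = borel_measurable_xmd xmd_fun_upd[OF k] V xk_fun_upd[OF k] this
  show "integrable paths (\<lambda>w. inner (noise w k) (z - xk w (k - 1)))"
    unfolding noise_eq_batch_error[OF k] by (rule integrable_inner_batch_error) (use * in simp_all)
  show "(\<integral>w. inner (noise w k) (z - xk w (k - 1)) \<partial>paths) = 0"
    unfolding noise_eq_batch_error[OF k] by (rule integral_inner_batch_error_eq_0) (use * in simp_all)
qed

lemma sum_weighted_variance_le:
  "(\<Sum>k = 1..N. rsag_weight k * (\<sigma>\<^sup>2 / real (batch k))) \<le> L * Dt\<^sup>2 * real N * (real N + 3) / 4"
proof -
  have "rsag_weight k * (\<sigma>\<^sup>2 / real (batch k)) \<le> L * Dt\<^sup>2 * ((real k + 1) / 2)" if k: "k \<ge> 1" for k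
  proof -
    have q: "0 < \<sigma>\<^sup>2 * real k / (L * Dt\<^sup>2)" using k \<sigma>_pos Dt_pos L_pos by simp
    have "0 < real (batch k) * (\<sigma>\<^sup>2 * real k / (L * Dt\<^sup>2))"
      using q batch_ge[of k] by (intro mult_pos_pos) auto
    then have "\<sigma>\<^sup>2 / real (batch k) \<le> \<sigma>\<^sup>2 / (\<sigma>\<^sup>2 * real k / (L * Dt\<^sup>2))"
      by (rule divide_left_mono[OF batch_ge, rotated]) simp
    also have "\<dots> = L * Dt\<^sup>2 / real k" using \<sigma>_pos by simp
    finally have "rsag_weight k * (\<sigma>\<^sup>2 / real (batch k)) \<le> rsag_weight k * (L * Dt\<^sup>2 / real k)"
      by (rule mult_left_mono[OF _ rsag_weight_nonneg])
    also have "\<dots> = L * Dt\<^sup>2 * ((real k + 1) / 2)"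
      unfolding rsag_weight_def using k by (simp add: field_simps)
    finally show ?thesis .
  qed
  then have "(\<Sum>k = 1..N. rsag_weight k * (\<sigma>\<^sup>2 / real (batch k))) \<le> (\<Sum>k = 1..N. L * Dt\<^sup>2 * ((real k + 1) / 2))"
    by (intro sum_mono) auto
  also have "\<dots> = L * Dt\<^sup>2 * ((\<Sum>k = 1..N. real k) / 2 + real N / 2)"
    by (simp add: sum_distrib_left[symmetric] sum.distrib add_divide_distrib sum_divide_distrib[symmetric])
  also have "\<dots> = L * Dt\<^sup>2 * real N * (real N + 3) / 4"
    unfolding sum_of_nat_atLeastAtMost by (simp add: field_simps)
  finally show ?thesis .
qed

lemma
  shows integrable_pathwise_bound: "integrable paths (pathwise_bound N)"
    and integral_pathwise_bound_le: "(\<integral>w. pathwise_bound N w \<partial>paths)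
      \<le> 128 / 3 * L\<^sup>2 * (norm (z - x0))\<^sup>2 + 32 / 3 * L * Lf * ((norm (z - x0))\<^sup>2 + radius_sq * real N * (real N + 1))
        + 134 / 3 * (L * Dt\<^sup>2 * real N * (real N + 3) / 4)"
proof -
  interpret P: prob_space paths by (rule prob_space_paths)
  have int: "integrable paths (\<lambda>w. \<Sum>k = 1..N. rsag_weight k * (norm (noise w k))\<^sup>2)"
    "integrable paths (\<lambda>w. \<Sum>k = 1..N. real k * inner (noise w k) (z - xk w (k - 1)))"
    using integrable_noise_sq integrable_inner_noise by auto
  then show "integrable paths (pathwise_bound N)"
    unfolding pathwise_bound_def[abs_def] by auto
  have zero: "(\<Sum>k = 1..N. real k * (\<integral>w. inner (noise w k) (z - xk w (k - 1)) \<partial>paths)) = 0"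
  proof (intro sum.neutral ballI)
    fix k assume "k \<in> {1..N}"
    then have "k \<ge> 1" by simp
    then show "real k * (\<integral>w. inner (noise w k) (z - xk w (k - 1)) \<partial>paths) = 0"
      using integral_inner_noise_eq_0 by simp
  qed
  have "(\<integral>w. pathwise_bound N w \<partial>paths)
      = 128 / 3 * L\<^sup>2 * (norm (z - x0))\<^sup>2 + 32 / 3 * L * Lf * ((norm (z - x0))\<^sup>2 + radius_sq * real N * (real N + 1))
        + 134 / 3 * (\<Sum>k = 1..N. rsag_weight k * (\<integral>w. (norm (noise w k))\<^sup>2 \<partial>paths))"
    unfolding pathwise_bound_def[abs_def] using int integrable_noise_sq integrable_inner_noise zero
    by (simp add: Bochner_Integration.integral_sum P.prob_space)
  also have "\<dots> \<le> 128 / 3 * L\<^sup>2 * (norm (z - x0))\<^sup>2 + 32 / 3 * L * Lf * ((norm (z - x0))\<^sup>2 + radius_sq * real N * (real N + 1))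
        + 134 / 3 * (\<Sum>k = 1..N. rsag_weight k * (\<sigma>\<^sup>2 / real (batch k)))"
    using integral_noise_sq_le by (intro add_left_mono mult_left_mono sum_mono rsag_weight_nonneg) auto
  finally show "(\<integral>w. pathwise_bound N w \<partial>paths)
      \<le> 128 / 3 * L\<^sup>2 * (norm (z - x0))\<^sup>2 + 32 / 3 * L * Lf * ((norm (z - x0))\<^sup>2 + radius_sq * real N * (real N + 1))
        + 134 / 3 * (L * Dt\<^sup>2 * real N * (real N + 3) / 4)"
    using sum_weighted_variance_le[of N] by linarith
qed

lemma Lh_nonneg: "Lh \<ge> 0" using h_lip lipschitz_on_nonneg by blast

lemma pathwise_bound_nonneg: "pathwise_bound N w \<ge> 0"
proof -
  have "0 \<le> (\<Sum>k = 1..N. rsag_weight k * (norm (grad_map_md w k))\<^sup>2)"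
    by (intro sum_nonneg mult_nonneg_nonneg rsag_weight_nonneg) auto
  then show ?thesis using sum_weighted_grad_map_md_le_pathwise_bound[of w N] by linarith
qed

lemma nn_integral_grad_map_md_eq_weighted_sum:
  fixes Rd :: "nat pmf"
  assumes R: "\<And>k. pmf Rd k = (if 1 \<le> k \<and> k \<le> N then rsag_prob L N k else 0)"
  defines "S \<equiv> \<Sum>j = 1..N. rsag_weight j"
  shows "(\<integral>\<^sup>+(k, w). ennreal ((norm (grad_map_md w k))\<^sup>2) \<partial>(measure_pmf Rd \<Otimes>\<^sub>M paths))
    = (\<integral>\<^sup>+w. ennreal ((\<Sum>k = 1..N. rsag_weight k * (norm (grad_map_md w k))\<^sup>2) / S) \<partial>paths)"
proof -
  have S: "S \<ge> 0" unfolding S_def by (intro sum_nonneg rsag_weight_nonneg)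
  have measurable: "(\<lambda>w. ennreal ((norm (grad_map_md w k))\<^sup>2)) \<in> borel_measurable paths" for k
    using borel_measurable_grad_map_md by measurable
  have "set_pmf Rd \<subseteq> {1..N}" using R by (auto simp: set_pmf_iff split: if_splits)
  then have "(\<integral>\<^sup>+(k, w). ennreal ((norm (grad_map_md w k))\<^sup>2) \<partial>(measure_pmf Rd \<Otimes>\<^sub>M paths))
      = (\<Sum>k\<in>{1..N}. (\<integral>\<^sup>+w. ennreal ((norm (grad_map_md w k))\<^sup>2) \<partial>paths) * pmf Rd k)"
    by (intro nn_integral_measure_pmf_pair prob_space_paths measurable) auto
  also have "\<dots> = (\<Sum>k\<in>{1..N}. \<integral>\<^sup>+w. ennreal (rsag_weight k / S * (norm (grad_map_md w k))\<^sup>2) \<partial>paths)"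
  proof (rule sum.cong[OF refl])
    fix k assume "k \<in> {1..N}"
    then have "pmf Rd k = rsag_weight k / S" using R rsag_prob_eq[OF L_pos] unfolding S_def by simp
    then have "(\<integral>\<^sup>+w. ennreal ((norm (grad_map_md w k))\<^sup>2) \<partial>paths) * pmf Rd k
        = (\<integral>\<^sup>+w. ennreal ((norm (grad_map_md w k))\<^sup>2) * ennreal (rsag_weight k / S) \<partial>paths)"
      by (simp add: nn_integral_multc[OF measurable])
    also have "\<dots> = (\<integral>\<^sup>+w. ennreal (rsag_weight k / S * (norm (grad_map_md w k))\<^sup>2) \<partial>paths)"
      using rsag_weight_nonneg[of k] S
      by (intro nn_integral_cong) (simp add: ennreal_mult[symmetric] mult.commute)
    finally show "(\<integral>\<^sup>+w. ennreal ((norm (grad_map_md w k))\<^sup>2) \<partial>paths) * pmf Rd k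
        = (\<integral>\<^sup>+w. ennreal (rsag_weight k / S * (norm (grad_map_md w k))\<^sup>2) \<partial>paths)" .
  qed
  also have "\<dots> = (\<integral>\<^sup>+w. (\<Sum>k = 1..N. ennreal (rsag_weight k / S * (norm (grad_map_md w k))\<^sup>2)) \<partial>paths)"
    by (rule nn_integral_sum[symmetric]) (use borel_measurable_grad_map_md in measurable)
  also have "\<dots> = (\<integral>\<^sup>+w. ennreal ((\<Sum>k = 1..N. rsag_weight k * (norm (grad_map_md w k))\<^sup>2) / S) \<partial>paths)"
    using rsag_weight_nonneg S by (intro nn_integral_cong) (simp add: sum_ennreal sum_divide_distrib)
  finally show ?thesis .
qed

lemma expected_grad_map_md_le:
  fixes Rd :: "nat pmf"
  assumes N: "N \<ge> 1" and R: "\<And>k. pmf Rd k = (if 1 \<le> k \<and> k \<le> N then rsag_prob L N k else 0)"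
  shows "(\<integral>\<^sup>+(k, w). ennreal ((norm (grad_map_md w k))\<^sup>2) \<partial>(measure_pmf Rd \<Otimes>\<^sub>M paths))
     \<le> ennreal (96 * L * (4 * L * (norm (x0 - z))\<^sup>2 / (real N)^3 + (Lf * radius_sq + 3 * Dt\<^sup>2) / real N))"
proof -
  interpret P: prob_space paths by (rule prob_space_paths)
  define S where "S = real N * (real N + 1) * (real N + 2) / 6"
  have S_pos: "S > 0" unfolding S_def using N by simp
  have "(\<integral>\<^sup>+(k, w). ennreal ((norm (grad_map_md w k))\<^sup>2) \<partial>(measure_pmf Rd \<Otimes>\<^sub>M paths))
      = (\<integral>\<^sup>+w. ennreal ((\<Sum>k = 1..N. rsag_weight k * (norm (grad_map_md w k))\<^sup>2) / S) \<partial>paths)"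
    unfolding nn_integral_grad_map_md_eq_weighted_sum[OF R] sum_rsag_weight S_def ..
  also have "\<dots> \<le> (\<integral>\<^sup>+w. ennreal (pathwise_bound N w / S) \<partial>paths)"
    using sum_weighted_grad_map_md_le_pathwise_bound S_pos
    by (intro nn_integral_mono ennreal_leI divide_right_mono) auto
  also have "\<dots> = ennreal ((\<integral>w. pathwise_bound N w \<partial>paths) / S)"
    using integrable_pathwise_bound[of N] pathwise_bound_nonneg S_pos
    by (subst nn_integral_eq_integral) auto
  also have "\<dots> \<le> ennreal ((128 / 3 * L\<^sup>2 * (norm (x0 - z))\<^sup>2
      + 32 / 3 * L * Lf * ((norm (x0 - z))\<^sup>2 + radius_sq * real N * (real N + 1))
      + 134 / 3 * (L * Dt\<^sup>2 * real N * (real N + 3) / 4)) / S)"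
    using integral_pathwise_bound_le[of N] S_pos
    by (intro ennreal_leI divide_right_mono) (auto simp: norm_minus_commute)
  also have "\<dots> \<le> ennreal (96 * L * (4 * L * (norm (x0 - z))\<^sup>2 / (real N)^3 + (Lf * radius_sq + 3 * Dt\<^sup>2) / real N))"
    unfolding S_def using N L_pos Lf_nonneg Lh_nonneg
    by (intro ennreal_leI rsag_rate_arith) (auto simp: radius_sq_def)
  finally show ?thesis .
qed

end

theorem corollary6:
  fixes f h :: "'a::euclidean_space \<Rightarrow> real"
    and gf gh :: "'a \<Rightarrow> 'a"
    and X :: "'a \<Rightarrow> ereal"
    and Lf Lh M \<sigma> Dt :: real
    and \<Xi> :: "'b measure"
    and G :: "'a \<Rightarrow> 'b \<Rightarrow> 'a"
    and N :: nat
    and Rd :: "nat pmf"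
    and x0 xstar :: 'a
  assumes f_grad: "\<And>x. GDERIV f x :> gf x"
    and f_lip: "Lf-lipschitz_on UNIV gf"
    and h_convex: "convex_on UNIV h"
    and h_grad: "\<And>x. GDERIV h x :> gh x"
    and h_lip: "Lh-lipschitz_on UNIV gh"
    and L_pos: "Lf + Lh > 0"
    and X_proper: "proper_efun X"
    and X_closed: "closed_efun X"
    and X_convex: "convex_efun X"
    and X_bdd: "bounded (edom X)"
    and P_bdd: "\<And>x y c. c > 0 \<Longrightarrow> norm (prox_map X x y c) \<le> M"
    and \<Xi>_prob: "prob_space \<Xi>"
    and G_meas: "(\<lambda>(x, \<xi>). G x \<xi>) \<in> borel_measurable (borel \<Otimes>\<^sub>M \<Xi>)"
    and G_integrable: "\<And>x. integrable \<Xi> (G x)"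
    and G_unbiased: "\<And>x. (\<integral>\<xi>. G x \<xi> \<partial>\<Xi>) = gf x + gh x"
    and G_var: "\<And>x. (\<integral>\<^sup>+\<xi>. ennreal ((norm (G x \<xi> - (gf x + gh x)))\<^sup>2) \<partial>\<Xi>) \<le> ennreal (\<sigma>\<^sup>2)"
    and \<sigma>_pos: "\<sigma> > 0"
    and N_ge: "N \<ge> 1"
    and Dt_pos: "Dt > 0"
    and R_dist: "\<And>k. pmf Rd k = (if 1 \<le> k \<and> k \<le> N then rsag_prob (Lf + Lh) N k else 0)"
    and xstar_opt: "\<And>x. ereal (f xstar + h xstar) + X xstar \<le> ereal (f x + h x) + X x"
  shows "(\<integral>\<^sup>+(k, \<omega>). ennreal ((norm (grad_map X
              (rsag_xmd X G (Lf + Lh) \<sigma> Dt x0 \<omega> k)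
              (gf (rsag_xmd X G (Lf + Lh) \<sigma> Dt x0 \<omega> k) + gh (rsag_xmd X G (Lf + Lh) \<sigma> Dt x0 \<omega> k))
              (rsag_beta (Lf + Lh) k)))\<^sup>2)
          \<partial>(measure_pmf Rd \<Otimes>\<^sub>M (\<Pi>\<^sub>M i\<in>UNIV. \<Xi>)))
     \<le> ennreal (96 * (Lf + Lh) * (4 * (Lf + Lh) * (norm (x0 - xstar))\<^sup>2 / (real N)^3
          + (Lf * ((norm xstar)\<^sup>2 + 2 * M\<^sup>2) + 3 * Dt\<^sup>2) / real N))"
proof -
  have "continuous_on UNIV (\<lambda>x. gf x + gh x)"
    using lipschitz_on_continuous_on[OF f_lip] lipschitz_on_continuous_on[OF h_lip]
    by (intro continuous_intros)
  then have g: "(\<lambda>x. gf x + gh x) \<in> borel_measurable borel" by (rule borel_measurable_continuous_onI)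
  interpret rsag_stochastic X f h gf gh Lf Lh M G \<sigma> Dt x0 xstar \<Xi>
    by (intro rsag_stochastic.intro rsag_trajectory.intro composite_problem.intro prox_regularizer.intro
        iid_oracle.intro composite_problem_axioms.intro rsag_trajectory_axioms.intro rsag_stochastic_axioms.intro)
      (simp_all only: assms g)
  have "(\<lambda>(k, \<omega>). ennreal ((norm (grad_map X
              (rsag_xmd X G (Lf + Lh) \<sigma> Dt x0 \<omega> k)
              (gf (rsag_xmd X G (Lf + Lh) \<sigma> Dt x0 \<omega> k) + gh (rsag_xmd X G (Lf + Lh) \<sigma> Dt x0 \<omega> k))
              (rsag_beta (Lf + Lh) k)))\<^sup>2))
     = (\<lambda>(k, w). ennreal ((norm (grad_map_md w k))\<^sup>2))"
    by (simp add: fun_eq_iff grad_map_md_def xmd_def grad_Psi_def rsag_beta_eq)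
  then show ?thesis
    using expected_grad_map_md_le[OF N_ge R_dist] unfolding paths_def radius_sq_def by simp
qed

end
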